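(* Let $\mathcal H$ be a separable Hilbert space, $A_0=B+\mathrm iC$ with $B$ self-adjoint and $C$ bounded with $C\ge\delta\mathbf 1$ for some $\delta>0$, and let $V$ be a bounded non-negative operator on $\mathcal H$. Then the restriction of $V^{1/2}A_0^{-1}V^{1/2}$ to $(\ker V)^\perp$ is injective, and the Birman–Schwinger operator $A_{BS}:=(V^{1/2}A_0^{-1}V^{1/2})^{-1}$ is a maximally dissipative operator in $(\ker V)^\perp$ with domain equal to the range of $V^{1/2}A_0^{-1}V^{1/2}$. Moreover, its resolvent set contains the closed lower half-plane $\overline{\mathbb C}_-=\{\xi:\mathrm{Im}\,\xi\le0\}$, and for every $\xi\in\overline{\mathbb C}_-$, $$(A_{BS}-\xi\mathbf 1)^{-1}=V^{1/2}(A_0-\xi V)^{-1}V^{1/2}\quad\text{on }(\ker V)^\perp.$$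
   Context: A densely defined operator $A$ is dissipative if $\mathrm{Im}\langle\varphi,A\varphi\rangle\ge0$ for all $\varphi$ in its domain, and maximally dissipative if it has no proper dissipative extension. *)

theory Defs
  imports "HOL-Analysis.Analysis"
begin

text \<open>A complex Hilbert space: a real Banach space carrying a complex scalar
multiplication (extending the real one) and a complex inner product which is
conjugate-linear in the FIRST and linear in the SECOND argument (physics
convention, as in the dissipativity condition Im <phi, A phi> >= 0), inducing the norm.\<close>

class chilbert = banach +
  fixes scaleC :: "complex \<Rightarrow> 'a \<Rightarrow> 'a" (infixr \<open>*\<^sub>C\<close> 75)
    and cinner :: "'a \<Rightarrow> 'a \<Rightarrow> complex"
  assumes scaleC_add_right: "a *\<^sub>C (x + y) = a *\<^sub>C x + a *\<^sub>C y"
    and scaleC_add_left: "(a + b) *\<^sub>C x = a *\<^sub>C x + b *\<^sub>C x"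
    and scaleC_scaleC: "a *\<^sub>C (b *\<^sub>C x) = (a * b) *\<^sub>C x"
    and scaleC_one: "1 *\<^sub>C x = x"
    and scaleC_of_real: "complex_of_real r *\<^sub>C x = scaleR r x"
    and cinner_commute: "cinner x y = cnj (cinner y x)"
    and cinner_add_right: "cinner x (y + z) = cinner x y + cinner x z"
    and cinner_scaleC_right: "cinner x (a *\<^sub>C y) = a * cinner x y"
    and cinner_self_norm: "cinner x x = complex_of_real ((norm x)\<^sup>2)"


text \<open>Sanity check: the class is inhabited (complex numbers as a 1-dimensional Hilbert space).\<close>
instantiation complex :: chilbert
begin
definition scaleC_complex :: "complex \<Rightarrow> complex \<Rightarrow> complex" where "scaleC_complex a x = a * x"
definition cinner_complex :: "complex \<Rightarrow> complex \<Rightarrow> complex" where "cinner_complex x y = cnj x * y"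
instance
proof
  fix a b :: complex and x y z :: complex and r :: real
  show "a *\<^sub>C (x + y) = a *\<^sub>C x + a *\<^sub>C y" by (simp add: scaleC_complex_def distrib_left)
  show "(a + b) *\<^sub>C x = a *\<^sub>C x + b *\<^sub>C x" by (simp add: scaleC_complex_def distrib_right)
  show "a *\<^sub>C (b *\<^sub>C x) = (a * b) *\<^sub>C x" by (simp add: scaleC_complex_def)
  show "1 *\<^sub>C x = x" by (simp add: scaleC_complex_def)
  show "complex_of_real r *\<^sub>C x = scaleR r x" by (simp add: scaleC_complex_def scaleR_conv_of_real)
  show "cinner x y = cnj (cinner y x)" by (simp add: cinner_complex_def mult.commute)
  show "cinner x (y + z) = cinner x y + cinner x z" by (simp add: cinner_complex_def distrib_left)
  show "cinner x (a *\<^sub>C y) = a * cinner x y" by (simp add: cinner_complex_def scaleC_complex_def)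
  show "cinner x x = complex_of_real ((norm x)\<^sup>2)"
    by (simp add: cinner_complex_def complex_norm_square mult.commute del: of_real_power)
qed
end

definition csubspace :: "'a::chilbert set \<Rightarrow> bool" where
  "csubspace S \<longleftrightarrow> 0 \<in> S \<and> (\<forall>x\<in>S. \<forall>y\<in>S. x + y \<in> S) \<and> (\<forall>a. \<forall>x\<in>S. a *\<^sub>C x \<in> S)"

definition clinear_on :: "'a::chilbert set \<Rightarrow> ('a \<Rightarrow> 'a) \<Rightarrow> bool" where
  "clinear_on S f \<longleftrightarrow> (\<forall>x\<in>S. \<forall>y\<in>S. f (x + y) = f x + f y) \<and> (\<forall>a. \<forall>x\<in>S. f (a *\<^sub>C x) = a *\<^sub>C f x)"

definition cbounded :: "('a::chilbert \<Rightarrow> 'a) \<Rightarrow> bool" where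
  "cbounded f \<longleftrightarrow> clinear_on UNIV f \<and> (\<exists>K. \<forall>x. norm (f x) \<le> K * norm x)"

definition nonneg_op :: "('a::chilbert \<Rightarrow> 'a) \<Rightarrow> bool" where
  "nonneg_op S \<longleftrightarrow> (\<forall>x. cinner x (S x) \<in> \<real> \<and> 0 \<le> Re (cinner x (S x)))"

definition op_sqrt :: "('a::chilbert \<Rightarrow> 'a) \<Rightarrow> 'a \<Rightarrow> 'a" where
  "op_sqrt V = (THE S. cbounded S \<and> nonneg_op S \<and> (\<forall>x. S (S x) = V x))"

definition ker :: "('a::chilbert \<Rightarrow> 'a) \<Rightarrow> 'a set" where
  "ker f = {x. f x = 0}"

definition orth_compl :: "'a::chilbert set \<Rightarrow> 'a set" where
  "orth_compl S = {x. \<forall>y\<in>S. cinner y x = 0}"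

definition adj_dom :: "'a::chilbert set \<Rightarrow> ('a \<Rightarrow> 'a) \<Rightarrow> 'a set" where
  "adj_dom D B = {y. \<exists>z. \<forall>x\<in>D. cinner y (B x) = cinner z x}"

text \<open>Self-adjoint (possibly unbounded) operator B with domain D in the whole space:
densely defined, linear, symmetric, and dom(B*) is contained in dom(B)
(so B* = B).\<close>
definition self_adjoint_op :: "'a::chilbert set \<Rightarrow> ('a \<Rightarrow> 'a) \<Rightarrow> bool" where
  "self_adjoint_op D B \<longleftrightarrow> csubspace D \<and> closure D = UNIV \<and> clinear_on D B \<and>
     (\<forall>x\<in>D. \<forall>y\<in>D. cinner (B x) y = cinner x (B y)) \<and> adj_dom D B \<subseteq> D"

definition dissipative_in :: "'a::chilbert set \<Rightarrow> 'a set \<Rightarrow> ('a \<Rightarrow> 'a) \<Rightarrow> bool" where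
  "dissipative_in M D T \<longleftrightarrow> csubspace D \<and> D \<subseteq> M \<and> M \<subseteq> closure D \<and> (\<forall>x\<in>D. T x \<in> M) \<and>
     clinear_on D T \<and> (\<forall>x\<in>D. 0 \<le> Im (cinner x (T x)))"

definition max_dissipative_in :: "'a::chilbert set \<Rightarrow> 'a set \<Rightarrow> ('a \<Rightarrow> 'a) \<Rightarrow> bool" where
  "max_dissipative_in M D T \<longleftrightarrow> dissipative_in M D T \<and>
     (\<forall>D' T'. dissipative_in M D' T' \<and> D \<subseteq> D' \<and> (\<forall>x\<in>D. T' x = T x) \<longrightarrow> D' = D)"

definition in_resolvent_in :: "'a::chilbert set \<Rightarrow> 'a set \<Rightarrow> ('a \<Rightarrow> 'a) \<Rightarrow> complex \<Rightarrow> bool" where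
  "in_resolvent_in M D T \<xi> \<longleftrightarrow> bij_betw (\<lambda>x. T x - \<xi> *\<^sub>C x) D M \<and>
     (\<exists>c. \<forall>y\<in>M. norm (inv_into D (\<lambda>x. T x - \<xi> *\<^sub>C x) y) \<le> c * norm y)"

end

theory Submission
  imports Defs
begin

text \<open>For \<open>Im \<xi> \<le> 0\<close> the pencil \<open>A\<^sub>0 - \<xi> V = (B - Re \<xi> V) + i (C - Im \<xi> V)\<close> is again of the
  form \<open>B + i C\<close>, so it maps \<open>D\<close> bijectively onto the space with \<open>\<parallel>(A\<^sub>0 - \<xi> V) u\<parallel> \<ge> \<delta> \<parallel>u\<parallel>\<close>: the
  bound comes from \<open>Im \<langle>u, A u\<rangle> \<ge> \<delta> \<parallel>u\<parallel>\<^sup>2\<close>, the range is closed because \<open>B\<close> is closed, and a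
  vector orthogonal to the range lies in \<open>dom B\<^sup>* = D\<close> and is therefore \<open>0\<close>.
  With \<open>u = A\<^sub>0\<^sup>-\<^sup>1 V\<^sup>1\<^sup>/\<^sup>2 m\<close> one has \<open>Im \<langle>K m, m\<rangle> = Im \<langle>u, A\<^sub>0 u\<rangle> \<ge> \<delta> \<parallel>u\<parallel>\<^sup>2\<close>, so \<open>K\<close> is injective
  on \<open>(ker V)\<^sup>\<bottom>\<close> with dense range there, and \<open>A\<^sub>B\<^sub>S = K\<^sup>-\<^sup>1\<close> is dissipative with \<open>A\<^sub>B\<^sub>S - \<xi>\<close>
  injective. The identity \<open>A\<^sub>0 = (A\<^sub>0 - \<xi> V) + \<xi> V\<^sup>1\<^sup>/\<^sup>2 V\<^sup>1\<^sup>/\<^sup>2\<close> makes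
  \<open>V\<^sup>1\<^sup>/\<^sup>2 (A\<^sub>0 - \<xi> V)\<^sup>-\<^sup>1 V\<^sup>1\<^sup>/\<^sup>2\<close> a right inverse of \<open>A\<^sub>B\<^sub>S - \<xi>\<close>, hence its resolvent, and
  surjectivity of \<open>A\<^sub>B\<^sub>S + i\<close> gives maximality. The square root \<open>V\<^sup>1\<^sup>/\<^sup>2\<close> itself is built from the
  power series of \<open>1 - sqrt(1 - t)\<close> applied to the contraction \<open>1 - V / \<parallel>V\<parallel>\<close>.\<close>

declare scaleC_one [simp] scaleC_of_real [simp]

lemma scaleC_zero_left [simp]: "(0::complex) *\<^sub>C (x::'a::chilbert) = 0"
  using scaleC_of_real[of 0 x] by simp

lemma scaleC_zero_right [simp]: "a *\<^sub>C (0::'a::chilbert) = 0"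
  using scaleC_add_right[of a "0::'a" 0] by simp

lemma scaleC_minus_right: "a *\<^sub>C (- x) = - (a *\<^sub>C (x::'a::chilbert))"
  using scaleC_add_right[of a "-x" x] by (simp add: eq_neg_iff_add_eq_0 add.commute)

lemma scaleC_diff_right: "a *\<^sub>C (x - y) = a *\<^sub>C x - a *\<^sub>C (y::'a::chilbert)"
  using scaleC_add_right[of a x "-y"] by (simp add: scaleC_minus_right)

lemma scaleC_minus_left: "(- a) *\<^sub>C x = - (a *\<^sub>C (x::'a::chilbert))"
  using scaleC_add_left[of a "-a" x] by (simp add: eq_neg_iff_add_eq_0 add.commute)

lemma scaleC_scaleR_commute: "a *\<^sub>C (r *\<^sub>R (x::'a::chilbert)) = r *\<^sub>R (a *\<^sub>C x)"
  by (simp flip: scaleC_of_real add: scaleC_scaleC mult.commute)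

lemma scaleC_Re_Im: "a *\<^sub>C x = Re a *\<^sub>R x + \<i> *\<^sub>C (Im a *\<^sub>R (x::'a::chilbert))"
proof -
  have "a *\<^sub>C x = (complex_of_real (Re a) + \<i> * complex_of_real (Im a)) *\<^sub>C x"
    by (simp only: complex_eq[symmetric])
  thus ?thesis by (simp only: scaleC_add_left scaleC_scaleC[symmetric] scaleC_of_real)
qed

lemma cinner_zero_right [simp]: "cinner x (0::'a::chilbert) = 0"
  using cinner_add_right[of x "0::'a" 0] by simp

lemma cinner_zero_left [simp]: "cinner (0::'a::chilbert) x = 0"
  using cinner_commute[of 0 x] by simp

lemma cinner_add_left: "cinner (x + y) (z::'a::chilbert) = cinner x z + cinner y z"
  by (metis cinner_add_right cinner_commute complex_cnj_add)

lemma cinner_scaleC_left: "cinner (a *\<^sub>C x) (y::'a::chilbert) = cnj a * cinner x y"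
  by (metis cinner_scaleC_right cinner_commute complex_cnj_mult)

lemma cinner_minus_right: "cinner x (- y) = - cinner x (y::'a::chilbert)"
  using cinner_add_right[of x y "-y"] by (simp add: eq_neg_iff_add_eq_0 add.commute)

lemma cinner_minus_left: "cinner (- x) y = - cinner x (y::'a::chilbert)"
  using cinner_add_left[of x "-x" y] by (simp add: eq_neg_iff_add_eq_0 add.commute)

lemma cinner_diff_right: "cinner x (y - z) = cinner x y - cinner x (z::'a::chilbert)"
  using cinner_add_right[of x y "-z"] by (simp add: cinner_minus_right)

lemma cinner_diff_left: "cinner (x - y) z = cinner x z - cinner y (z::'a::chilbert)"
  using cinner_add_left[of x "-y" z] by (simp add: cinner_minus_left)

lemma cinner_scaleR_right: "cinner x (r *\<^sub>R y) = complex_of_real r * cinner x (y::'a::chilbert)"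
  by (metis cinner_scaleC_right scaleC_of_real)

lemma cinner_scaleR_left: "cinner (r *\<^sub>R x) y = complex_of_real r * cinner x (y::'a::chilbert)"
  by (metis cinner_scaleC_left scaleC_of_real complex_cnj_complex_of_real)

lemma Re_cinner_self: "Re (cinner x (x::'a::chilbert)) = (norm x)\<^sup>2"
  by (simp add: cinner_self_norm)

lemma cinner_self_eq_0 [simp]: "cinner x x = 0 \<longleftrightarrow> (x::'a::chilbert) = 0"
  by (simp add: cinner_self_norm)

lemma norm_scaleC: "norm (a *\<^sub>C (x::'a::chilbert)) = cmod a * norm x"
proof -
  have "complex_of_real ((norm (a *\<^sub>C x))\<^sup>2) = cnj a * a * complex_of_real ((norm x)\<^sup>2)"
    by (metis cinner_self_norm cinner_scaleC_left cinner_scaleC_right mult.assoc)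
  also have "cnj a * a = complex_of_real ((cmod a)\<^sup>2)"
    using complex_norm_square[of a] by (simp add: mult.commute)
  finally have "(norm (a *\<^sub>C x))\<^sup>2 = (cmod a * norm x)\<^sup>2"
    by (metis of_real_eq_iff of_real_mult power_mult_distrib)
  thus ?thesis by (simp add: power2_eq_iff_nonneg)
qed

lemma power2_norm_add:
  "(norm (x + y))\<^sup>2 = (norm x)\<^sup>2 + 2 * Re (cinner x y) + (norm (y::'a::chilbert))\<^sup>2"
proof -
  have "cinner (x + y) (x + y) = cinner x x + cinner x y + cinner y x + cinner y y"
    by (simp add: cinner_add_left cinner_add_right)
  hence "Re (cinner (x + y) (x + y)) = Re (cinner x x) + 2 * Re (cinner x y) + Re (cinner y y)"
    using cinner_commute[of y x] by simp
  thus ?thesis by (simp add: Re_cinner_self)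
qed

lemma power2_norm_diff:
  "(norm (x - y))\<^sup>2 = (norm x)\<^sup>2 - 2 * Re (cinner x y) + (norm (y::'a::chilbert))\<^sup>2"
  using power2_norm_add[of x "-y"] by (simp add: cinner_minus_right)

lemma parallelogram_law:
  "(norm (u + v))\<^sup>2 + (norm (u - v))\<^sup>2 = 2 * (norm u)\<^sup>2 + 2 * (norm (v::'a::chilbert))\<^sup>2"
  by (simp add: power2_norm_add power2_norm_diff)

lemma csubspace_0: "csubspace S \<Longrightarrow> 0 \<in> S"
  and csubspace_add: "csubspace S \<Longrightarrow> x \<in> S \<Longrightarrow> y \<in> S \<Longrightarrow> x + y \<in> S"
  and csubspace_scaleC: "csubspace S \<Longrightarrow> x \<in> S \<Longrightarrow> a *\<^sub>C x \<in> S"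
  unfolding csubspace_def by blast+

lemma csubspace_scaleR: "csubspace S \<Longrightarrow> x \<in> S \<Longrightarrow> r *\<^sub>R x \<in> S"
  by (metis csubspace_scaleC scaleC_of_real)

lemma csubspace_diff: "csubspace S \<Longrightarrow> x \<in> S \<Longrightarrow> y \<in> S \<Longrightarrow> x - y \<in> S"
  using csubspace_add[of S x "(-1) *\<^sub>C y"] csubspace_scaleC[of S y "-1"]
  by (simp add: scaleC_minus_left)

lemma csubspace_UNIV: "csubspace (UNIV :: 'a::chilbert set)"
  by (simp add: csubspace_def)

lemma clinearI:
  assumes "\<And>x y. f (x + y) = f x + f y" "\<And>a x. f (a *\<^sub>C x) = a *\<^sub>C f x"
  shows "clinear_on UNIV f"
  using assms unfolding clinear_on_def by blast

lemma clinear_on_add: "clinear_on S f \<Longrightarrow> x \<in> S \<Longrightarrow> y \<in> S \<Longrightarrow> f (x + y) = f x + f y"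
  and clinear_on_scaleC: "clinear_on S f \<Longrightarrow> x \<in> S \<Longrightarrow> f (a *\<^sub>C x) = a *\<^sub>C f x"
  unfolding clinear_on_def by blast+

lemma clinear_on_0: "clinear_on S f \<Longrightarrow> csubspace S \<Longrightarrow> f 0 = (0::'a::chilbert)"
  using clinear_on_scaleC[of S f 0 0] csubspace_0[of S] by simp

lemma clinear_on_diff:
  assumes "clinear_on S f" "csubspace S" "x \<in> S" "y \<in> S"
  shows "f (x - y) = f x - f (y::'a::chilbert)"
  using clinear_on_add[OF assms(1,3), of "(-1) *\<^sub>C y"] clinear_on_scaleC[OF assms(1,4), of "-1"]
    csubspace_scaleC[OF assms(2,4), of "-1"]
  by (simp add: scaleC_minus_left)

lemma clinear_add: "clinear_on UNIV f \<Longrightarrow> f (x + y) = f x + f y"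
  and clinear_scaleC: "clinear_on UNIV f \<Longrightarrow> f (a *\<^sub>C x) = a *\<^sub>C f x"
  and clinear_0: "clinear_on UNIV f \<Longrightarrow> f 0 = (0::'a::chilbert)"
  and clinear_diff: "clinear_on UNIV f \<Longrightarrow> f (x - y) = f x - f y"
  by (auto intro: clinear_on_add clinear_on_scaleC clinear_on_0 clinear_on_diff csubspace_UNIV)

lemma clinear_minus: "clinear_on UNIV f \<Longrightarrow> f (- x) = - f (x::'a::chilbert)"
  using clinear_diff[of f 0 x] clinear_0[of f] by simp

lemma clinear_scaleR: "clinear_on UNIV f \<Longrightarrow> f (r *\<^sub>R x) = r *\<^sub>R f (x::'a::chilbert)"
  using clinear_scaleC[of f "complex_of_real r" x] by simp

lemma clinear_sum: "clinear_on UNIV (f::'a::chilbert \<Rightarrow> 'a) \<Longrightarrow> f (\<Sum>i\<in>I. g i) = (\<Sum>i\<in>I. f (g i))"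
  by (induction I rule: infinite_finite_induct) (auto simp: clinear_add clinear_0)

lemmas clinear_simps = clinear_add clinear_scaleC clinear_0 clinear_diff clinear_minus clinear_scaleR

lemma csubspace_image:
  assumes "csubspace S" "clinear_on S f"
  shows "csubspace (f ` S)"
  unfolding csubspace_def
proof (intro conjI ballI allI)
  show "0 \<in> f ` S"
    using clinear_on_0[OF assms(2,1)] csubspace_0[OF assms(1)] by (metis image_eqI)
next
  fix x y assume "x \<in> f ` S" "y \<in> f ` S"
  then obtain u v where "u \<in> S" "v \<in> S" "x = f u" "y = f v" by blast
  thus "x + y \<in> f ` S"
    using clinear_on_add[OF assms(2)] csubspace_add[OF assms(1)] by (metis image_eqI)
next
  fix a x assume "x \<in> f ` S"
  then obtain u where "u \<in> S" "x = f u" by blast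
  thus "a *\<^sub>C x \<in> f ` S"
    using clinear_on_scaleC[OF assms(2)] csubspace_scaleC[OF assms(1)] by (metis image_eqI)
qed

lemma clinear_on_inv_into:
  assumes S: "csubspace S" and f: "clinear_on S f" and inj: "inj_on f S"
  shows "clinear_on (f ` S) (inv_into S f)"
  unfolding clinear_on_def
proof (intro conjI ballI allI)
  fix x y assume "x \<in> f ` S" "y \<in> f ` S"
  then obtain u v where uv: "u \<in> S" "v \<in> S" "x = f u" "y = f v" by blast
  hence "x + y = f (u + v)" using clinear_on_add[OF f] by simp
  thus "inv_into S f (x + y) = inv_into S f x + inv_into S f y"
    using uv csubspace_add[OF S] by (simp add: inv_into_f_f[OF inj])
next
  fix a x assume "x \<in> f ` S"
  then obtain u where u: "u \<in> S" "x = f u" by blast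
  hence "a *\<^sub>C x = f (a *\<^sub>C u)" using clinear_on_scaleC[OF f] by simp
  thus "inv_into S f (a *\<^sub>C x) = a *\<^sub>C inv_into S f x"
    using u csubspace_scaleC[OF S] by (simp add: inv_into_f_f[OF inj])
qed

lemma cinner_hermitian_commute:
  assumes lin: "clinear_on UNIV (S::'a::chilbert \<Rightarrow> 'a)" and real: "\<forall>x. cinner x (S x) \<in> \<real>"
  shows "cinner (S x) y = cinner x (S y)"
proof -
  define a where "a = cinner x (S y)"
  define b where "b = cinner y (S x)"
  have e1: "cinner (x + y) (S (x + y)) = cinner x (S x) + a + b + cinner y (S y)"
    by (simp add: clinear_add[OF lin] cinner_add_left cinner_add_right a_def b_def)
  have e2: "cinner (x + \<i> *\<^sub>C y) (S (x + \<i> *\<^sub>C y))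
      = cinner x (S x) + \<i> * a - \<i> * b + \<i> * (- \<i>) * cinner y (S y)"
    by (simp add: clinear_simps[OF lin] cinner_add_left cinner_add_right a_def b_def
        cinner_scaleC_left cinner_scaleC_right algebra_simps)
  have "Im (cinner x (S x)) = 0" "Im (cinner y (S y)) = 0"
    "Im (cinner (x + y) (S (x + y))) = 0" "Im (cinner (x + \<i> *\<^sub>C y) (S (x + \<i> *\<^sub>C y))) = 0"
    using real by (auto simp: complex_is_Real_iff)
  hence "Im a + Im b = 0" "Re a - Re b = 0" using e1 e2 by auto
  hence "a = cnj b" by (simp add: complex_eq_iff)
  thus ?thesis unfolding a_def b_def by (metis cinner_commute)
qed

lemma nonneg_op_cinner_real: "nonneg_op S \<Longrightarrow> cinner x (S x) \<in> \<real>"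
  by (simp add: nonneg_op_def)

lemma nonneg_op_cinner_nonneg: "nonneg_op S \<Longrightarrow> 0 \<le> Re (cinner x (S x))"
  by (simp add: nonneg_op_def)

lemma nonneg_op_cinner_commute:
  "clinear_on UNIV S \<Longrightarrow> nonneg_op S \<Longrightarrow> cinner (S x) y = cinner x (S y)"
  by (simp add: cinner_hermitian_commute nonneg_op_def)

text \<open>Expansion of \<open>\<langle>x + l y, S (x + l y)\<rangle> \<ge> 0\<close> with \<open>l = - t cnj \<langle>x, S y\<rangle>\<close>.\<close>

lemma nonneg_op_quadratic:
  assumes lin: "clinear_on UNIV (S::'a::chilbert \<Rightarrow> 'a)" and nn: "nonneg_op S"
  shows "0 \<le> Re (cinner x (S x)) - 2 * t * (cmod (cinner x (S y)))\<^sup>2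
           + t\<^sup>2 * (cmod (cinner x (S y)))\<^sup>2 * Re (cinner y (S y))"
proof -
  define a where "a = cinner x (S y)"
  define l where "l = - complex_of_real t * cnj a"
  have "a * cnj a = complex_of_real ((cmod a)\<^sup>2)" using complex_norm_square[of a] by simp
  hence la: "l * a = - complex_of_real (t * (cmod a)\<^sup>2)" and cla: "cnj l * cnj a = l * a"
    and ll: "cnj l * l = complex_of_real (t\<^sup>2 * (cmod a)\<^sup>2)"
    unfolding l_def by (simp_all add: power2_eq_square mult.commute mult.left_commute)
  have "cinner y (S x) = cnj a"
    by (metis a_def cinner_commute nonneg_op_cinner_commute[OF lin nn])
  hence "cinner (x + l *\<^sub>C y) (S (x + l *\<^sub>C y))
      = cinner x (S x) + l * a + cnj l * cnj a + cnj l * l * cinner y (S y)"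
    by (simp add: clinear_simps[OF lin] cinner_add_left cinner_add_right a_def[symmetric]
        cinner_scaleC_left cinner_scaleC_right algebra_simps)
  hence "Re (cinner (x + l *\<^sub>C y) (S (x + l *\<^sub>C y)))
      = Re (cinner x (S x)) - 2 * t * (cmod a)\<^sup>2 + t\<^sup>2 * (cmod a)\<^sup>2 * Re (cinner y (S y))"
    using nonneg_op_cinner_real[OF nn, of y] unfolding cla la ll by (simp add: complex_is_Real_iff)
  thus ?thesis unfolding a_def by (metis nonneg_op_cinner_nonneg[OF nn])
qed

lemma nonneg_op_cauchy_schwarz:
  assumes lin: "clinear_on UNIV (S::'a::chilbert \<Rightarrow> 'a)" and nn: "nonneg_op S"
  shows "(cmod (cinner x (S y)))\<^sup>2 \<le> Re (cinner x (S x)) * Re (cinner y (S y))"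
    and "Re (cinner y (S y)) = 0 \<Longrightarrow> cinner x (S y) = 0"
proof -
  define a where "a = (cmod (cinner x (S y)))\<^sup>2"
  define qx where "qx = Re (cinner x (S x))"
  define qy where "qy = Re (cinner y (S y))"
  have quadratic: "0 \<le> qx - 2 * t * a + t\<^sup>2 * a * qy" for t
    unfolding a_def qx_def qy_def by (rule nonneg_op_quadratic[OF lin nn])
  show zero: "qy = 0 \<Longrightarrow> cinner x (S y) = 0"
  proof (rule ccontr)
    assume "qy = 0" "cinner x (S y) \<noteq> 0"
    hence "0 < a" by (simp add: a_def)
    hence "qx - 2 * ((qx + 1) / (2 * a)) * a = -1" by (simp add: field_simps)
    thus False using quadratic[of "(qx + 1) / (2 * a)"] \<open>qy = 0\<close> by simp
  qed
  show "a \<le> qx * qy"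
  proof (cases "qy = 0")
    case True thus ?thesis using zero by (simp add: a_def)
  next
    case False
    hence p: "0 < qy" using nonneg_op_cinner_nonneg[OF nn] by (simp add: qy_def order_less_le)
    have "0 \<le> qx - 2 * (1/qy) * a + (1/qy)\<^sup>2 * a * qy" by (rule quadratic)
    also have "\<dots> = qx - a / qy" using p by (simp add: field_simps power2_eq_square)
    finally show ?thesis using p by (simp add: field_simps mult.commute)
  qed
qed

lemma nonneg_op_eq_0_if_form_eq_0:
  assumes "clinear_on UNIV (S::'a::chilbert \<Rightarrow> 'a)" "nonneg_op S" "Re (cinner y (S y)) = 0"
  shows "S y = 0"
  using nonneg_op_cauchy_schwarz(2)[OF assms, of "S y"] by simp

lemma cinner_cauchy_schwarz: "cmod (cinner x y) \<le> norm x * norm (y::'a::chilbert)"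
proof -
  have "clinear_on UNIV (\<lambda>x::'a. x)" "nonneg_op (\<lambda>x::'a. x)"
    by (simp_all add: clinear_on_def nonneg_op_def cinner_self_norm)
  from nonneg_op_cauchy_schwarz(1)[OF this, of x y]
  have "(cmod (cinner x y))\<^sup>2 \<le> (norm x * norm y)\<^sup>2"
    by (simp add: Re_cinner_self power_mult_distrib)
  thus ?thesis by (meson norm_ge_zero power2_le_imp_le zero_le_mult_iff)
qed

lemma bounded_linear_cinner_right: "bounded_linear (\<lambda>y. cinner x (y::'a::chilbert))"
  by (rule bounded_linear_intro[where K="norm x"])
    (simp_all add: cinner_add_right cinner_scaleR_right scaleR_conv_of_real,
      metis cinner_cauchy_schwarz mult.commute)

lemma bounded_linear_cinner_left: "bounded_linear (\<lambda>y. cinner (y::'a::chilbert) x)"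
  by (rule bounded_linear_intro[where K="norm x"])
    (simp_all add: cinner_add_left cinner_scaleR_left scaleR_conv_of_real,
      rule cinner_cauchy_schwarz)

lemma bounded_linear_scaleC: "bounded_linear (\<lambda>y. a *\<^sub>C (y::'a::chilbert))"
  by (rule bounded_linear_intro[where K="cmod a"])
    (simp_all add: scaleC_add_right scaleC_scaleR_commute norm_scaleC)

lemma cbounded_clinear: "cbounded f \<Longrightarrow> clinear_on UNIV f"
  by (simp add: cbounded_def)

lemma cbounded_bounded_linear:
  assumes "cbounded (f::'a::chilbert \<Rightarrow> 'a)"
  shows "bounded_linear f"
proof -
  obtain K where K: "\<forall>x. norm (f x) \<le> K * norm x" and f: "clinear_on UNIV f"
    using assms unfolding cbounded_def by auto
  show ?thesis
    by (rule bounded_linear_intro[where K=K]) (use K in \<open>auto simp: clinear_simps[OF f] mult.commute\<close>)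
qed

lemma cbounded_posE:
  assumes "cbounded (f::'a::chilbert \<Rightarrow> 'a)"
  obtains K where "K > 0" "\<And>x. norm (f x) \<le> K * norm x"
proof -
  obtain K where "K > 0" "\<And>x. norm (f x) \<le> norm x * K"
    using bounded_linear.pos_bounded[OF cbounded_bounded_linear[OF assms]] by blast
  thus ?thesis using that by (metis mult.commute)
qed

lemma cbounded_intro:
  assumes "clinear_on UNIV f" "\<And>x. norm (f x) \<le> K * norm x"
  shows "cbounded f"
  using assms unfolding cbounded_def by blast

lemma cbounded_diff:
  assumes F: "cbounded (F::'a::chilbert \<Rightarrow> 'a)" and G: "cbounded G"
  shows "cbounded (\<lambda>x. F x - G x)"
proof -
  obtain K1 where K1: "\<And>x. norm (F x) \<le> K1 * norm x" using cbounded_posE[OF F] by blast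
  obtain K2 where K2: "\<And>x. norm (G x) \<le> K2 * norm x" using cbounded_posE[OF G] by blast
  show ?thesis
  proof (rule cbounded_intro)
    show "clinear_on UNIV (\<lambda>x. F x - G x)"
      by (rule clinearI) (simp_all add: clinear_simps[OF cbounded_clinear[OF F]]
          clinear_simps[OF cbounded_clinear[OF G]] scaleC_diff_right)
    show "norm (F x - G x) \<le> (K1 + K2) * norm x" for x
      using norm_triangle_ineq4[of "F x" "G x"] K1[of x] K2[of x] by (simp add: algebra_simps)
  qed
qed

lemma cbounded_scaleR:
  assumes F: "cbounded (F::'a::chilbert \<Rightarrow> 'a)"
  shows "cbounded (\<lambda>x. r *\<^sub>R F x)"
proof -
  obtain K where K: "\<And>x. norm (F x) \<le> K * norm x" using cbounded_posE[OF F] by blast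
  show ?thesis
  proof (rule cbounded_intro)
    show "clinear_on UNIV (\<lambda>x. r *\<^sub>R F x)"
      by (rule clinearI) (simp_all add: clinear_simps[OF cbounded_clinear[OF F]]
          scaleR_add_right scaleC_scaleR_commute)
    show "norm (r *\<^sub>R F x) \<le> (\<bar>r\<bar> * K) * norm x" for x
      using mult_left_mono[OF K[of x], of "\<bar>r\<bar>"] by (simp add: mult.assoc)
  qed
qed

lemma closed_cinner_eq_0: "closed {x. cinner y x = (0::complex)}"
  by (intro closed_Collect_eq continuous_on_const linear_continuous_on bounded_linear_cinner_right)

lemma cinner_eq_0_on_dense:
  assumes "closure D = UNIV" "\<forall>x\<in>D. cinner z x = 0"
  shows "(z::'a::chilbert) = 0"
proof -
  have "closure D \<subseteq> {x. cinner z x = 0}"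
    using assms(2) by (intro closure_minimal closed_cinner_eq_0) auto
  hence "cinner z z = 0" using assms(1) by blast
  thus ?thesis by simp
qed

lemma orth_compl_csubspace: "csubspace (orth_compl (S::'a::chilbert set))"
  unfolding csubspace_def orth_compl_def by (auto simp: cinner_add_right cinner_scaleC_right)

lemma closed_orth_compl: "closed (orth_compl (S::'a::chilbert set))"
proof -
  have "orth_compl S = (\<Inter>y\<in>S. {x. cinner y x = 0})" unfolding orth_compl_def by auto
  thus ?thesis using closed_cinner_eq_0 by auto
qed

lemma ker_csubspace:
  assumes "clinear_on UNIV (V::'a::chilbert \<Rightarrow> 'a)"
  shows "csubspace (ker V)"
  unfolding csubspace_def ker_def
  by (simp add: clinear_add[OF assms] clinear_scaleC[OF assms] clinear_0[OF assms])

lemma closed_ker: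
  assumes "cbounded (V::'a::chilbert \<Rightarrow> 'a)"
  shows "closed (ker V)"
proof -
  have "continuous_on UNIV V" by (rule linear_continuous_on[OF cbounded_bounded_linear[OF assms]])
  thus ?thesis unfolding ker_def by (rule closed_Collect_eq[OF _ continuous_on_const])
qed

section \<open>The square root of a non-negative operator\<close>

text \<open>The Taylor coefficients of \<open>f(t) = 1 - sqrt(1 - t)\<close>, determined by \<open>2 f = t + f\<^sup>2\<close>.\<close>

fun sqrt_coeff :: "nat \<Rightarrow> real" where
  "sqrt_coeff 0 = 0"
| "sqrt_coeff (Suc 0) = 1/2"
| "sqrt_coeff (Suc (Suc n)) =
     (\<Sum>j\<in>{1..Suc n}. sqrt_coeff j * sqrt_coeff (Suc (Suc n) - j)) / 2"

lemma sqrt_coeff_nonneg: "0 \<le> sqrt_coeff n"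
proof (induction n rule: less_induct)
  case (less n)
  show ?case
  proof (cases n rule: sqrt_coeff.cases)
    case (3 m)
    have "0 \<le> (\<Sum>j\<in>{1..Suc m}. sqrt_coeff j * sqrt_coeff (Suc (Suc m) - j))"
      using less 3 by (intro sum_nonneg mult_nonneg_nonneg) auto
    thus ?thesis using 3 by simp
  qed auto
qed

lemma sqrt_coeff_convolution:
  "(\<Sum>i\<le>n. sqrt_coeff i * sqrt_coeff (n - i)) = 2 * sqrt_coeff n - (if n = 1 then 1 else 0)"
proof (cases n rule: sqrt_coeff.cases)
  case (3 m)
  have "{..Suc (Suc m)} = insert 0 (insert (Suc (Suc m)) {1..Suc m})" by auto
  thus ?thesis using 3 by simp
qed auto

lemma sqrt_coeff_triangle_sum:
  "(\<Sum>(i,j)\<in>{(i,j). i + j < N}. sqrt_coeff i * sqrt_coeff j)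
     = 2 * (\<Sum>k<N. sqrt_coeff k) - (if 2 \<le> N then 1 else 0)"
proof -
  have "(\<Sum>(i,j)\<in>{(i,j). i + j < N}. sqrt_coeff i * sqrt_coeff j)
      = (\<Sum>n<N. \<Sum>i\<le>n. sqrt_coeff i * sqrt_coeff (n - i))"
    by (rule sum.triangle_reindex)
  also have "\<dots> = (\<Sum>n<N. 2 * sqrt_coeff n - (if n = 1 then 1 else 0))"
    by (simp add: sqrt_coeff_convolution)
  also have "\<dots> = 2 * (\<Sum>k<N. sqrt_coeff k) - (if 2 \<le> N then 1 else 0)"
    by (simp add: sum_subtractf sum_distrib_left sum.delta)
  finally show ?thesis .
qed

lemma sqrt_coeff_square_sum:
  "(\<Sum>(i,j)\<in>{..<N} \<times> {..<N}. sqrt_coeff i * sqrt_coeff j) = (\<Sum>k<N. sqrt_coeff k)\<^sup>2"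
  by (simp add: power2_eq_square sum_product sum.cartesian_product)

lemma sqrt_coeff_partial_sum_le_1: "(\<Sum>k<N. sqrt_coeff k) \<le> 1"
proof (induction N)
  case (Suc N)
  let ?T = "{(i,j). i + j < Suc N}" and ?Q = "{..<N} \<times> {..<N}"
  let ?f = "\<lambda>(i,j). sqrt_coeff i * sqrt_coeff j"
  have "finite ?T" by (rule finite_subset[of _ "{..<Suc N} \<times> {..<Suc N}"]) auto
  hence "sum ?f ?T = sum ?f (?T \<inter> ?Q) + sum ?f (?T - ?Q)" by (metis sum.Int_Diff)
  also have "sum ?f (?T - ?Q) = 0"
  proof (rule sum.neutral, intro ballI)
    fix p assume p: "p \<in> ?T - ?Q"
    obtain i j where ij: "p = (i, j)" by fastforce
    with p have "i = 0 \<or> j = 0" by auto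
    thus "?f p = 0" using ij by auto
  qed
  also have "sum ?f (?T \<inter> ?Q) \<le> sum ?f ?Q"
    by (rule sum_mono2) (auto simp: sqrt_coeff_nonneg)
  finally have "2 * (\<Sum>k<Suc N. sqrt_coeff k) - (if 2 \<le> Suc N then 1 else 0)
      \<le> (\<Sum>k<N. sqrt_coeff k)\<^sup>2"
    by (simp only: sqrt_coeff_triangle_sum sqrt_coeff_square_sum) simp
  moreover have "0 \<le> (\<Sum>k<N. sqrt_coeff k)" by (simp add: sqrt_coeff_nonneg sum_nonneg)
  moreover have "(\<Sum>k<N. sqrt_coeff k)\<^sup>2 \<le> 1" using Suc calculation(2) by (simp add: power_le_one)
  ultimately show ?case by (cases "N = 0") simp_all
qed simp

lemma summable_sqrt_coeff: "summable sqrt_coeff"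
  by (rule summableI_nonneg_bounded[of _ 1])
    (auto simp: sqrt_coeff_nonneg sqrt_coeff_partial_sum_le_1)

text \<open>This is \<open>f(1) = 1\<close>: the limit \<open>L\<close> satisfies \<open>L\<^sup>2 = 2 L - 1\<close>.\<close>

lemma suminf_sqrt_coeff: "(\<Sum>k. sqrt_coeff k) = 1"
proof -
  define L where "L = (\<Sum>k. sqrt_coeff k)"
  have sn: "summable (\<lambda>k. norm (sqrt_coeff k))" using summable_sqrt_coeff sqrt_coeff_nonneg by simp
  have "L * L = (\<Sum>k. \<Sum>i\<le>k. sqrt_coeff i * sqrt_coeff (k - i))"
    unfolding L_def by (rule Cauchy_product[OF sn sn])
  also have "\<dots> = (\<Sum>k. 2 * sqrt_coeff k - (if k = 1 then 1 else 0))"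
    by (simp add: sqrt_coeff_convolution)
  also have "\<dots> = 2 * L - 1"
  proof (rule sums_unique[symmetric])
    show "(\<lambda>k. 2 * sqrt_coeff k - (if k = 1 then 1 else 0)) sums (2 * L - 1)"
      using sums_diff[OF sums_mult[OF summable_sums[OF summable_sqrt_coeff], of 2]
          sums_single[of 1 "\<lambda>_. 1::real"]]
      by (simp add: L_def)
  qed
  finally have "(L - 1)\<^sup>2 = 0" by (simp add: power2_eq_square algebra_simps)
  thus ?thesis unfolding L_def by simp
qed

lemma sqrt_coeff_partial_sum_tendsto: "(\<lambda>N. \<Sum>k<N. sqrt_coeff k) \<longlonglongrightarrow> 1"
  using summable_LIMSEQ[OF summable_sqrt_coeff] by (simp add: suminf_sqrt_coeff)

lemma clinear_funpow:
  assumes f: "clinear_on UNIV f"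
  shows "clinear_on UNIV (f ^^ k)"
proof (induction k)
  case (Suc k)
  show ?case
    by (rule clinearI) (simp_all add: clinear_add[OF f] clinear_scaleC[OF f] clinear_add[OF Suc]
        clinear_scaleC[OF Suc])
qed (simp add: clinear_on_def)

lemma funpow_commute: "(\<And>x. F (T x) = T (F x)) \<Longrightarrow> F ((T ^^ k) x) = (T ^^ k) (F x)"
  by (induction k) simp_all

locale hermitian_contraction =
  fixes T :: "'a::chilbert \<Rightarrow> 'a"
  assumes cbounded: "cbounded T"
    and cinner_real: "\<forall>x. cinner x (T x) \<in> \<real>"
    and contraction: "norm (T x) \<le> norm x"
begin

lemma clinear: "clinear_on UNIV T"
  using cbounded by (rule cbounded_clinear)

lemma norm_funpow_le: "norm ((T ^^ k) x) \<le> norm x"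
  by (induction k) (auto intro: order_trans[OF contraction])

lemma cinner_funpow_commute: "cinner ((T ^^ k) x) y = cinner x ((T ^^ k) y)"
proof (induction k arbitrary: x y)
  case (Suc k)
  have "cinner ((T ^^ Suc k) x) y = cinner ((T ^^ k) x) (T y)"
    using cinner_hermitian_commute[OF clinear cinner_real] by simp
  also have "\<dots> = cinner x ((T ^^ Suc k) y)" by (simp add: Suc funpow_swap1)
  finally show ?case .
qed simp

lemma cinner_funpow_real: "cinner x ((T ^^ k) x) \<in> \<real>"
  by (metis Reals_cnj_iff cinner_commute cinner_funpow_commute)

text \<open>The operator \<open>1 - sqrt(1 - T)\<close>, as a power series in \<open>T\<close>.\<close>

definition sqrt_series :: "'a \<Rightarrow> 'a" where
  "sqrt_series x = (\<Sum>k. sqrt_coeff k *\<^sub>R (T ^^ k) x)"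

definition sqrt_partial :: "nat \<Rightarrow> 'a \<Rightarrow> 'a" where
  "sqrt_partial N x = (\<Sum>k<N. sqrt_coeff k *\<^sub>R (T ^^ k) x)"

lemma summable_norm_sqrt_series: "summable (\<lambda>k. norm (sqrt_coeff k *\<^sub>R (T ^^ k) x))"
  by (rule summable_comparison_test'[of "\<lambda>k. sqrt_coeff k * norm x" 0])
    (auto simp: summable_mult2 summable_sqrt_coeff sqrt_coeff_nonneg norm_funpow_le mult_left_mono)

lemma summable_sqrt_series: "summable (\<lambda>k. sqrt_coeff k *\<^sub>R (T ^^ k) x)"
  using summable_norm_sqrt_series by (rule summable_norm_cancel)

lemma sqrt_partial_tendsto: "(\<lambda>N. sqrt_partial N x) \<longlonglongrightarrow> sqrt_series x"
  unfolding sqrt_partial_def sqrt_series_def by (rule summable_LIMSEQ[OF summable_sqrt_series])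

lemma norm_sqrt_series_le: "norm (sqrt_series x) \<le> norm x"
proof -
  have "norm (sqrt_series x) \<le> (\<Sum>k. norm (sqrt_coeff k *\<^sub>R (T ^^ k) x))"
    unfolding sqrt_series_def by (rule summable_norm[OF summable_norm_sqrt_series])
  also have "\<dots> \<le> (\<Sum>k. sqrt_coeff k * norm x)"
    by (intro suminf_le summable_norm_sqrt_series summable_mult2 summable_sqrt_coeff)
      (simp add: sqrt_coeff_nonneg norm_funpow_le mult_left_mono)
  also have "\<dots> = norm x" using suminf_mult2[OF summable_sqrt_coeff] suminf_sqrt_coeff by simp
  finally show ?thesis .
qed

lemma norm_sqrt_partial_le: "norm (sqrt_partial N x) \<le> norm x"
proof -
  have "norm (sqrt_partial N x) \<le> (\<Sum>k<N. norm (sqrt_coeff k *\<^sub>R (T ^^ k) x))"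
    unfolding sqrt_partial_def by (rule norm_sum)
  also have "\<dots> \<le> (\<Sum>k<N. sqrt_coeff k) * norm x"
    by (simp add: sum_distrib_right sum_mono sqrt_coeff_nonneg norm_funpow_le mult_left_mono)
  also have "\<dots> \<le> norm x"
    by (simp add: mult_left_le_one_le sqrt_coeff_partial_sum_le_1 sqrt_coeff_nonneg sum_nonneg)
  finally show ?thesis .
qed

lemma clinear_sqrt_series: "clinear_on UNIV sqrt_series"
  unfolding clinear_on_def
proof (intro conjI ballI allI)
  note lin = clinear_funpow[OF clinear]
  show "sqrt_series (x + y) = sqrt_series x + sqrt_series y" for x y
    unfolding sqrt_series_def
    by (simp add: clinear_add[OF lin] scaleR_add_right suminf_add[OF summable_sqrt_series summable_sqrt_series])
  show "sqrt_series (a *\<^sub>C x) = a *\<^sub>C sqrt_series x" for a x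
    unfolding sqrt_series_def
    by (simp add: clinear_scaleC[OF lin] scaleC_scaleR_commute
        bounded_linear.suminf[OF bounded_linear_scaleC summable_sqrt_series])
qed

lemma sqrt_partial_diff: "sqrt_partial N (x - y) = sqrt_partial N x - sqrt_partial N y"
  unfolding sqrt_partial_def
  by (simp add: clinear_diff[OF clinear_funpow[OF clinear]] scaleR_diff_right sum_subtractf)

lemma sqrt_series_commute:
  assumes F: "cbounded F" and commute: "\<And>x. F (T x) = T (F x)"
  shows "F (sqrt_series x) = sqrt_series (F x)"
proof -
  have "F (sqrt_series x) = (\<Sum>k. F (sqrt_coeff k *\<^sub>R (T ^^ k) x))"
    unfolding sqrt_series_def by (rule bounded_linear.suminf[OF cbounded_bounded_linear[OF F] summable_sqrt_series])
  thus ?thesis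
    by (simp add: sqrt_series_def clinear_scaleR[OF cbounded_clinear[OF F]] funpow_commute[of F T, OF commute])
qed

lemma cinner_sqrt_series_sums:
  "(\<lambda>k. complex_of_real (sqrt_coeff k) * cinner x ((T ^^ k) x)) sums cinner x (sqrt_series x)"
  using bounded_linear.sums[OF bounded_linear_cinner_right summable_sums[OF summable_sqrt_series]]
  by (simp add: sqrt_series_def cinner_scaleR_right)

lemma cinner_sqrt_series_real: "cinner x (sqrt_series x) \<in> \<real>"
proof -
  have "(\<lambda>k. Im (complex_of_real (sqrt_coeff k) * cinner x ((T ^^ k) x))) sums Im (cinner x (sqrt_series x))"
    by (rule bounded_linear.sums[OF bounded_linear_Im cinner_sqrt_series_sums])
  moreover have "(\<lambda>k. Im (complex_of_real (sqrt_coeff k) * cinner x ((T ^^ k) x))) = (\<lambda>k. 0)"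
    using cinner_funpow_real by (simp add: complex_is_Real_iff fun_eq_iff)
  ultimately have "Im (cinner x (sqrt_series x)) = 0"
    using sums_zero sums_unique2 by metis
  thus ?thesis by (simp add: complex_is_Real_iff)
qed

lemma Re_cinner_sqrt_series_le: "Re (cinner x (sqrt_series x)) \<le> (norm x)\<^sup>2"
proof -
  have "(\<lambda>k. Re (complex_of_real (sqrt_coeff k) * cinner x ((T ^^ k) x))) sums Re (cinner x (sqrt_series x))"
    by (rule bounded_linear.sums[OF bounded_linear_Re cinner_sqrt_series_sums])
  moreover have "(\<lambda>k. sqrt_coeff k * (norm x)\<^sup>2) sums (norm x)\<^sup>2"
    using sums_mult2[OF summable_sums[OF summable_sqrt_coeff], of "(norm x)\<^sup>2"]
    by (simp add: suminf_sqrt_coeff)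
  moreover have "Re (complex_of_real (sqrt_coeff k) * cinner x ((T ^^ k) x)) \<le> sqrt_coeff k * (norm x)\<^sup>2" for k
  proof -
    have "Re (cinner x ((T ^^ k) x)) \<le> norm x * norm ((T ^^ k) x)"
      using complex_Re_le_cmod cinner_cauchy_schwarz by (rule order_trans)
    also have "\<dots> \<le> (norm x)\<^sup>2" by (simp add: power2_eq_square norm_funpow_le mult_left_mono)
    finally show ?thesis by (simp add: sqrt_coeff_nonneg mult_left_mono)
  qed
  ultimately show ?thesis by (rule sums_le[rotated 1])
qed

lemma sqrt_partial_square:
  "sqrt_partial N (sqrt_partial N x)
     = (\<Sum>(i,j)\<in>{..<N} \<times> {..<N}. (sqrt_coeff i * sqrt_coeff j) *\<^sub>R (T ^^ (i + j)) x)"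
  unfolding sqrt_partial_def
  by (simp add: clinear_sum[OF clinear_funpow[OF clinear]] clinear_scaleR[OF clinear_funpow[OF clinear]]
      funpow_add scaleR_sum_right sum.cartesian_product)

lemma sqrt_partial_triangle_sum:
  "(\<Sum>(i,j)\<in>{(i,j). i + j < N}. (sqrt_coeff i * sqrt_coeff j) *\<^sub>R (T ^^ (i + j)) x)
     = 2 *\<^sub>R sqrt_partial N x - (if 2 \<le> N then T x else 0)"
proof -
  have "(\<Sum>(i,j)\<in>{(i,j). i + j < N}. (sqrt_coeff i * sqrt_coeff j) *\<^sub>R (T ^^ (i + j)) x)
      = (\<Sum>n<N. (\<Sum>i\<le>n. sqrt_coeff i * sqrt_coeff (n - i)) *\<^sub>R (T ^^ n) x)"
    by (simp add: sum.triangle_reindex scaleR_sum_left)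
  also have "\<dots> = (\<Sum>n<N. (2 * sqrt_coeff n) *\<^sub>R (T ^^ n) x - (if n = 1 then T x else 0))"
    by (intro sum.cong) (auto simp: sqrt_coeff_convolution algebra_simps)
  also have "\<dots> = 2 *\<^sub>R sqrt_partial N x - (if 2 \<le> N then T x else 0)"
    by (simp add: sqrt_partial_def sum_subtractf scaleR_sum_right sum.delta)
  finally show ?thesis .
qed

lemma norm_sqrt_partial_square_remainder:
  assumes "2 \<le> N"
  shows "norm (sqrt_partial N (sqrt_partial N x) - (2 *\<^sub>R sqrt_partial N x - T x))
           \<le> ((\<Sum>k<N. sqrt_coeff k) - 1)\<^sup>2 * norm x"
proof -
  let ?Q = "{..<N} \<times> {..<N}" and ?T = "{(i,j). i + j < N}"
  let ?c = "\<lambda>(i,j). sqrt_coeff i * sqrt_coeff j"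
  let ?g = "\<lambda>(i,j). (sqrt_coeff i * sqrt_coeff j) *\<^sub>R (T ^^ (i + j)) x"
  have sub: "?T \<subseteq> ?Q" by auto
  have "sqrt_partial N (sqrt_partial N x) - (2 *\<^sub>R sqrt_partial N x - T x) = sum ?g (?Q - ?T)"
    using sqrt_partial_square sqrt_partial_triangle_sum assms sum.subset_diff[OF sub, of ?g] by simp
  hence "norm (sqrt_partial N (sqrt_partial N x) - (2 *\<^sub>R sqrt_partial N x - T x))
      \<le> (\<Sum>p\<in>?Q - ?T. norm (?g p))"
    by (simp add: norm_sum)
  also have "\<dots> \<le> (\<Sum>p\<in>?Q - ?T. ?c p * norm x)"
    by (rule sum_mono) (auto simp: sqrt_coeff_nonneg norm_funpow_le mult_left_mono)
  also have "\<dots> = (sum ?c ?Q - sum ?c ?T) * norm x"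
    using sum.subset_diff[OF sub, of ?c] by (simp add: sum_distrib_right)
  also have "sum ?c ?Q = (\<Sum>k<N. sqrt_coeff k)\<^sup>2"
    by (rule sqrt_coeff_square_sum)
  also have "sum ?c ?T = 2 * (\<Sum>k<N. sqrt_coeff k) - 1"
    using sqrt_coeff_triangle_sum[of N] assms by simp
  also have "(\<Sum>k<N. sqrt_coeff k)\<^sup>2 - (2 * (\<Sum>k<N. sqrt_coeff k) - 1) = ((\<Sum>k<N. sqrt_coeff k) - 1)\<^sup>2"
    by (simp add: power2_eq_square algebra_simps)
  finally show ?thesis .
qed

lemma sqrt_partial_square_tendsto_remainder:
  "(\<lambda>N. sqrt_partial N (sqrt_partial N x)) \<longlonglongrightarrow> 2 *\<^sub>R sqrt_series x - T x"
proof -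
  let ?P = "sqrt_partial"
  have "(\<lambda>N. ?P N (?P N x) - (2 *\<^sub>R ?P N x - T x)) \<longlonglongrightarrow> 0"
  proof (rule Lim_null_comparison)
    show "\<forall>\<^sub>F N in sequentially. norm (?P N (?P N x) - (2 *\<^sub>R ?P N x - T x))
        \<le> ((\<Sum>k<N. sqrt_coeff k) - 1)\<^sup>2 * norm x"
      using eventually_ge_at_top[of 2] by eventually_elim (rule norm_sqrt_partial_square_remainder)
    have "(\<lambda>N. ((\<Sum>k<N. sqrt_coeff k) - 1)\<^sup>2 * norm x) \<longlonglongrightarrow> (1 - 1)\<^sup>2 * norm x"
      by (intro tendsto_intros sqrt_coeff_partial_sum_tendsto)
    thus "(\<lambda>N. ((\<Sum>k<N. sqrt_coeff k) - 1)\<^sup>2 * norm x) \<longlonglongrightarrow> 0" by simp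
  qed
  moreover have "(\<lambda>N. 2 *\<^sub>R ?P N x - T x) \<longlonglongrightarrow> 2 *\<^sub>R sqrt_series x - T x"
    by (intro tendsto_intros sqrt_partial_tendsto)
  ultimately have "(\<lambda>N. (?P N (?P N x) - (2 *\<^sub>R ?P N x - T x)) + (2 *\<^sub>R ?P N x - T x))
      \<longlonglongrightarrow> 0 + (2 *\<^sub>R sqrt_series x - T x)"
    by (rule tendsto_add)
  thus ?thesis by simp
qed

text \<open>The partial sums are uniformly bounded, so they may be composed in the limit.\<close>

lemma sqrt_partial_square_tendsto:
  "(\<lambda>N. sqrt_partial N (sqrt_partial N x)) \<longlonglongrightarrow> sqrt_series (sqrt_series x)"
proof -
  let ?P = "sqrt_partial" and ?S = sqrt_series
  have bound: "norm (?P N (?P N x) - ?S (?S x))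
      \<le> norm (?P N x - ?S x) + norm (?P N (?S x) - ?S (?S x))" for N
  proof -
    have "?P N (?P N x) - ?S (?S x) = ?P N (?P N x - ?S x) + (?P N (?S x) - ?S (?S x))"
      by (simp add: sqrt_partial_diff)
    hence "norm (?P N (?P N x) - ?S (?S x))
        \<le> norm (?P N (?P N x - ?S x)) + norm (?P N (?S x) - ?S (?S x))"
      by (metis norm_triangle_ineq)
    thus ?thesis using norm_sqrt_partial_le[of N "?P N x - ?S x"] by linarith
  qed
  have "(\<lambda>N. norm (?P N x - ?S x) + norm (?P N (?S x) - ?S (?S x))) \<longlonglongrightarrow> 0"
    using tendsto_add[OF tendsto_norm_zero[OF LIM_zero[OF sqrt_partial_tendsto]]
        tendsto_norm_zero[OF LIM_zero[OF sqrt_partial_tendsto]]] by simp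
  hence "(\<lambda>N. ?P N (?P N x) - ?S (?S x)) \<longlonglongrightarrow> 0"
    by (rule Lim_null_comparison[OF always_eventually[OF allI[OF bound]]])
  thus ?thesis by (rule LIM_zero_cancel)
qed

lemma sqrt_series_square: "sqrt_series (sqrt_series x) = 2 *\<^sub>R sqrt_series x - T x"
  using sqrt_partial_square_tendsto sqrt_partial_square_tendsto_remainder by (rule LIMSEQ_unique)

definition sqrt_one_minus :: "'a \<Rightarrow> 'a" where
  "sqrt_one_minus x = x - sqrt_series x"

lemma clinear_sqrt_one_minus: "clinear_on UNIV sqrt_one_minus"
  by (rule clinearI) (simp_all add: sqrt_one_minus_def clinear_add[OF clinear_sqrt_series]
      clinear_scaleC[OF clinear_sqrt_series] scaleC_diff_right)

lemma norm_sqrt_one_minus_le: "norm (sqrt_one_minus x) \<le> 2 * norm x"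
  using norm_triangle_ineq4[of x "sqrt_series x"] norm_sqrt_series_le[of x]
  by (simp add: sqrt_one_minus_def)

lemma nonneg_op_sqrt_one_minus: "nonneg_op sqrt_one_minus"
  using cinner_sqrt_series_real Re_cinner_sqrt_series_le
  by (auto simp: nonneg_op_def sqrt_one_minus_def cinner_diff_right cinner_self_norm complex_is_Real_iff)

lemma sqrt_one_minus_square: "sqrt_one_minus (sqrt_one_minus x) = x - T x"
  by (simp add: sqrt_one_minus_def clinear_diff[OF clinear_sqrt_series] sqrt_series_square scaleR_2)

lemma sqrt_one_minus_commute:
  assumes "cbounded F" "\<And>x. F (T x) = T (F x)"
  shows "F (sqrt_one_minus x) = sqrt_one_minus (F x)"
  using sqrt_series_commute[OF assms]
  by (simp add: sqrt_one_minus_def clinear_diff[OF cbounded_clinear[OF assms(1)]])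

end

lemma nonneg_op_norm_square_le:
  assumes V: "clinear_on UNIV (V::'a::chilbert \<Rightarrow> 'a)" "nonneg_op V"
    and K: "\<And>x. norm (V x) \<le> K * norm x"
  shows "(norm (V x))\<^sup>2 \<le> K * Re (cinner x (V x))"
proof (cases "V x = 0")
  case False
  have "((norm (V x))\<^sup>2)\<^sup>2 = (cmod (cinner (V x) (V x)))\<^sup>2"
    by (simp add: cinner_self_norm del: of_real_power)
  also have "\<dots> \<le> Re (cinner (V x) (V (V x))) * Re (cinner x (V x))"
    by (rule nonneg_op_cauchy_schwarz(1)[OF V])
  also have "\<dots> \<le> (K * (norm (V x))\<^sup>2) * Re (cinner x (V x))"
  proof (rule mult_right_mono[OF _ nonneg_op_cinner_nonneg[OF V(2)]])
    have "Re (cinner (V x) (V (V x))) \<le> norm (V x) * norm (V (V x))"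
      using complex_Re_le_cmod cinner_cauchy_schwarz by (rule order_trans)
    also have "\<dots> \<le> norm (V x) * (K * norm (V x))" using K by (simp add: mult_left_mono)
    finally show "Re (cinner (V x) (V (V x))) \<le> K * (norm (V x))\<^sup>2"
      by (simp add: power2_eq_square algebra_simps)
  qed
  finally have "(norm (V x))\<^sup>2 * (norm (V x))\<^sup>2 \<le> (norm (V x))\<^sup>2 * (K * Re (cinner x (V x)))"
    by (simp add: power2_eq_square[of "(norm (V x))\<^sup>2"] mult_ac)
  moreover have "0 < (norm (V x))\<^sup>2" using False by simp
  ultimately show ?thesis using mult_le_cancel_left_pos by blast
qed (simp add: nonneg_op_cinner_nonneg[OF V(2)] mult_nonneg_nonneg)

lemma hermitian_contraction_one_minus:
  assumes V: "cbounded (V::'a::chilbert \<Rightarrow> 'a)" "nonneg_op V"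
    and K: "K > 0" "\<And>x. norm (V x) \<le> K * norm x"
  shows "hermitian_contraction (\<lambda>x. x - (1/K) *\<^sub>R V x)"
proof
  have lin: "clinear_on UNIV V" using V(1) by (rule cbounded_clinear)
  show "cbounded (\<lambda>x. x - (1/K) *\<^sub>R V x)"
  proof (rule cbounded_intro)
    show "clinear_on UNIV (\<lambda>x. x - (1/K) *\<^sub>R V x)"
      by (rule clinearI) (simp_all add: clinear_simps[OF lin] scaleR_add_right scaleC_diff_right
          scaleC_scaleR_commute)
    show "norm (x - (1/K) *\<^sub>R V x) \<le> 2 * norm x" for x
    proof -
      have "norm (V x) / K \<le> norm x" using K by (simp add: pos_divide_le_eq mult.commute)
      thus ?thesis using norm_triangle_ineq4[of x "(1/K) *\<^sub>R V x"] K(1) by simp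
    qed
  qed
  show "\<forall>x. cinner x (x - (1/K) *\<^sub>R V x) \<in> \<real>"
    using nonneg_op_cinner_real[OF V(2)]
    by (simp add: cinner_diff_right cinner_scaleR_right cinner_self_norm)
  fix x
  define q where "q = Re (cinner x (V x))"
  have q0: "0 \<le> q" using nonneg_op_cinner_nonneg[OF V(2)] by (simp add: q_def)
  have "(norm (x - (1/K) *\<^sub>R V x))\<^sup>2 = (norm x)\<^sup>2 - 2 * (q / K) + (norm (V x))\<^sup>2 / K\<^sup>2"
    using K(1) by (simp add: power2_norm_diff cinner_scaleR_right q_def power_divide)
  also have "(norm (V x))\<^sup>2 / K\<^sup>2 \<le> (K * q) / K\<^sup>2"
    using nonneg_op_norm_square_le[OF lin V(2) K(2), of x] by (intro divide_right_mono) (simp_all add: q_def)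
  also have "(K * q) / K\<^sup>2 = q / K" using K(1) by (simp add: power2_eq_square)
  finally have "(norm (x - (1/K) *\<^sub>R V x))\<^sup>2 \<le> (norm x)\<^sup>2"
    using divide_nonneg_pos[OF q0 K(1)] by linarith
  thus "norm (x - (1/K) *\<^sub>R V x) \<le> norm x" by (rule power2_le_imp_le) simp
qed

lemma nonneg_op_sqrt_exists:
  assumes V: "cbounded (V::'a::chilbert \<Rightarrow> 'a)" "nonneg_op V"
  obtains R where "cbounded R" "nonneg_op R" "\<And>x. R (R x) = V x"
    "\<And>F x. cbounded F \<Longrightarrow> (\<And>y. F (V y) = V (F y)) \<Longrightarrow> F (R x) = R (F x)"
proof -
  obtain K where K: "K > 0" "\<And>x. norm (V x) \<le> K * norm x" using cbounded_posE[OF V(1)] by blast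
  have lin: "clinear_on UNIV V" using V(1) by (rule cbounded_clinear)
  define T where "T x = x - (1/K) *\<^sub>R V x" for x
  interpret c: hermitian_contraction T
    unfolding T_def by (rule hermitian_contraction_one_minus[OF V K])
  define R where "R x = sqrt K *\<^sub>R c.sqrt_one_minus x" for x
  show ?thesis
  proof
    show "cbounded R"
    proof (rule cbounded_intro)
      show "clinear_on UNIV R"
        by (rule clinearI) (simp_all add: R_def clinear_add[OF c.clinear_sqrt_one_minus]
            clinear_scaleC[OF c.clinear_sqrt_one_minus] scaleR_add_right scaleC_scaleR_commute)
      show "norm (R x) \<le> (sqrt K * 2) * norm x" for x
        using c.norm_sqrt_one_minus_le[of x] K(1) by (simp add: R_def mult_left_mono mult.assoc)
    qed
    show "nonneg_op R"
      using c.nonneg_op_sqrt_one_minus K(1) by (auto simp: nonneg_op_def R_def cinner_scaleR_right)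
    show "R (R x) = V x" for x
      using K(1) by (simp add: R_def clinear_scaleR[OF c.clinear_sqrt_one_minus] c.sqrt_one_minus_square T_def)
    show "F (R x) = R (F x)" if F: "cbounded F" and commute: "\<And>y. F (V y) = V (F y)" for F x
    proof -
      have "F (T y) = T (F y)" for y
        using commute by (simp add: T_def clinear_simps[OF cbounded_clinear[OF F]])
      thus ?thesis
        using c.sqrt_one_minus_commute[OF F] by (simp add: R_def clinear_scaleR[OF cbounded_clinear[OF F]])
    qed
  qed
qed

text \<open>With \<open>y = (S - S') x\<close>, \<open>(S + S') y = 0\<close> forces \<open>S y = S' y = 0\<close>, so
  \<open>\<parallel>y\<parallel>\<^sup>2 = \<langle>x, (S - S') y\<rangle> = 0\<close>.\<close>

lemma nonneg_op_sqrt_unique: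
  assumes S: "cbounded (S::'a::chilbert \<Rightarrow> 'a)" "nonneg_op S" and S': "cbounded S'" "nonneg_op S'"
    and square: "\<And>x. S (S x) = S' (S' x)" and commute: "\<And>x. S (S' x) = S' (S x)"
  shows "S = S'"
proof
  fix x
  have l: "clinear_on UNIV S" "clinear_on UNIV S'" using S S' by (auto simp: cbounded_clinear)
  define y where "y = S x - S' x"
  have "S y + S' y = 0"
    unfolding y_def by (simp add: clinear_diff[OF l(1)] clinear_diff[OF l(2)] square commute)
  hence "cinner y (S y) + cinner y (S' y) = 0"
    using cinner_add_right[of y "S y" "S' y"] by simp
  hence "Re (cinner y (S y)) + Re (cinner y (S' y)) = 0"
    by (metis plus_complex.sel(1) zero_complex.sel(1))
  hence "Re (cinner y (S y)) = 0" "Re (cinner y (S' y)) = 0"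
    using add_nonneg_eq_0_iff[OF nonneg_op_cinner_nonneg[OF S(2)] nonneg_op_cinner_nonneg[OF S'(2)]]
    by auto
  hence "S y = 0" "S' y = 0"
    using nonneg_op_eq_0_if_form_eq_0[OF l(1) S(2), of y] nonneg_op_eq_0_if_form_eq_0[OF l(2) S'(2), of y]
    by auto
  moreover have "cinner y y = cinner x (S y - S' y)"
    by (simp add: y_def cinner_diff_left cinner_diff_right clinear_diff[OF l(1)] clinear_diff[OF l(2)]
        nonneg_op_cinner_commute[OF l(1) S(2)] nonneg_op_cinner_commute[OF l(2) S'(2)])
  ultimately have "y = 0" by simp
  thus "S x = S' x" by (simp add: y_def)
qed

lemma op_sqrt:
  assumes V: "cbounded (V::'a::chilbert \<Rightarrow> 'a)" "nonneg_op V"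
  shows "cbounded (op_sqrt V)" "nonneg_op (op_sqrt V)" "\<And>x. op_sqrt V (op_sqrt V x) = V x"
proof -
  obtain R where R: "cbounded R" "nonneg_op R" "\<And>x. R (R x) = V x"
    and commute: "\<And>F x. cbounded F \<Longrightarrow> (\<And>y. F (V y) = V (F y)) \<Longrightarrow> F (R x) = R (F x)"
    using nonneg_op_sqrt_exists[OF V] by blast
  have "\<exists>!S. cbounded S \<and> nonneg_op S \<and> (\<forall>x. S (S x) = V x)"
  proof (rule ex1I[of _ R])
    show "cbounded R \<and> nonneg_op R \<and> (\<forall>x. R (R x) = V x)" using R by blast
    fix S assume S: "cbounded S \<and> nonneg_op S \<and> (\<forall>x. S (S x) = V x)"
    hence "S (V x) = V (S x)" for x by metis
    hence "S (R x) = R (S x)" for x using commute S by blast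
    thus "S = R" using S R by (intro nonneg_op_sqrt_unique) auto
  qed
  from theI'[OF this] show "cbounded (op_sqrt V)" "nonneg_op (op_sqrt V)" "\<And>x. op_sqrt V (op_sqrt V x) = V x"
    unfolding op_sqrt_def by auto
qed

section \<open>Orthogonal projection onto a subspace\<close>

lemma cinner_eq_0_if_norm_minimal:
  assumes min: "\<And>t. norm e \<le> norm (e - t *\<^sub>C s)"
  shows "cinner s (e::'a::chilbert) = 0"
proof (cases "s = 0")
  case False
  define a where "a = cinner s e"
  define n where "n = (norm s)\<^sup>2"
  have n0: "n > 0" using False by (simp add: n_def)
  define t where "t = a / complex_of_real n"
  have "cinner e (t *\<^sub>C s) = t * cnj a"
    by (simp add: cinner_scaleC_right a_def cinner_commute[of e s])
  also have "\<dots> = complex_of_real ((cmod a)\<^sup>2 / n)"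
    using complex_norm_square[of a] by (simp add: t_def mult.commute)
  finally have "Re (cinner e (t *\<^sub>C s)) = (cmod a)\<^sup>2 / n" by simp
  moreover have "(norm (t *\<^sub>C s))\<^sup>2 = (cmod a)\<^sup>2 / n"
  proof -
    have "cmod t = cmod a / n" using n0 by (simp add: t_def norm_divide)
    have "(norm (t *\<^sub>C s))\<^sup>2 = (cmod t)\<^sup>2 * n" by (simp add: norm_scaleC power_mult_distrib n_def)
    also have "\<dots> = (cmod a)\<^sup>2 / n" using n0 \<open>cmod t = cmod a / n\<close> by (simp add: power2_eq_square)
    finally show ?thesis .
  qed
  ultimately have "(norm (e - t *\<^sub>C s))\<^sup>2 = (norm e)\<^sup>2 - (cmod a)\<^sup>2 / n"
    by (simp add: power2_norm_diff)
  moreover have "(norm e)\<^sup>2 \<le> (norm (e - t *\<^sub>C s))\<^sup>2" using min[of t] by (simp add: power_mono)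
  ultimately have "(cmod a)\<^sup>2 / n \<le> 0" by simp
  thus ?thesis using n0 by (simp add: a_def divide_le_0_iff)
qed simp

text \<open>The parallelogram law applied to \<open>f - a m\<close>, \<open>f - a n\<close> and their midpoint.\<close>

lemma Cauchy_minimizing_sequence:
  assumes S: "csubspace S" and d: "\<And>s. s \<in> S \<Longrightarrow> d \<le> norm (f - s)"
    and a: "\<And>n. a n \<in> S" and lim: "(\<lambda>n. norm (f - a n)) \<longlonglongrightarrow> d"
  shows "Cauchy (a :: nat \<Rightarrow> 'a::chilbert)"
proof (rule metric_CauchyI)
  fix \<epsilon> :: real assume "\<epsilon> > 0"
  have d0: "0 \<le> d" using lim by (rule LIMSEQ_le_const) auto
  define e where "e n = (norm (f - a n))\<^sup>2 - d\<^sup>2" for n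
  have bound: "(norm (a m - a n))\<^sup>2 \<le> 2 * e m + 2 * e n" for m n
  proof -
    have "(1/2::real) *\<^sub>R (a m + a n) \<in> S" using a S by (simp add: csubspace_add csubspace_scaleR)
    moreover have "(f - a m) + (f - a n) = 2 *\<^sub>R (f - (1/2::real) *\<^sub>R (a m + a n))"
      by (simp add: algebra_simps scaleR_2)
    ultimately have "2 * d \<le> norm ((f - a m) + (f - a n))"
      using d[of "(1/2::real) *\<^sub>R (a m + a n)"] by simp
    hence "(2 * d)\<^sup>2 \<le> (norm ((f - a m) + (f - a n)))\<^sup>2" using d0 by (intro power_mono) auto
    thus ?thesis
      using parallelogram_law[of "f - a m" "f - a n"] norm_minus_commute[of "a m" "a n"]
      by (simp add: e_def power2_eq_square algebra_simps)
  qed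
  have "e \<longlonglongrightarrow> d\<^sup>2 - d\<^sup>2" unfolding e_def by (intro tendsto_intros lim)
  hence "\<forall>\<^sub>F n in sequentially. e n < \<epsilon>\<^sup>2 / 4"
    by (rule order_tendstoD(2)) (use \<open>\<epsilon> > 0\<close> in simp)
  then obtain N where N: "\<And>n. n \<ge> N \<Longrightarrow> e n < \<epsilon>\<^sup>2 / 4" by (auto simp: eventually_sequentially)
  show "\<exists>N. \<forall>m\<ge>N. \<forall>n\<ge>N. dist (a m) (a n) < \<epsilon>"
  proof (intro exI allI impI)
    fix m n assume "N \<le> m" "N \<le> n"
    hence "(norm (a m - a n))\<^sup>2 < \<epsilon>\<^sup>2" using bound[of m n] N[of m] N[of n] by simp
    hence "norm (a m - a n) < \<epsilon>" by (rule power_less_imp_less_base) (use \<open>\<epsilon> > 0\<close> in simp)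
    thus "dist (a m) (a n) < \<epsilon>" by (simp add: dist_norm)
  qed
qed

lemma orthogonal_projection_exists:
  assumes S: "csubspace S"
  shows "\<exists>p\<in>closure S. \<forall>s\<in>S. cinner s (f - p) = (0::complex)"
proof -
  define d where "d = Inf ((\<lambda>s. norm (f - s)) ` S)"
  have ne: "(\<lambda>s. norm (f - s)) ` S \<noteq> {}" using csubspace_0[OF S] by auto
  have bdd: "bdd_below ((\<lambda>s. norm (f - s)) ` S)" by (rule bdd_belowI[of _ 0]) auto
  have d: "d \<le> norm (f - s)" if "s \<in> S" for s
    unfolding d_def by (rule cINF_lower[OF bdd that])
  have "\<exists>s\<in>S. norm (f - s) < d + inverse (real (Suc n))" for n
    using cInf_lessD[OF ne, of "d + inverse (real (Suc n))"] by (auto simp: d_def)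
  then obtain a where a: "\<And>n. a n \<in> S"
    and a_less: "\<And>n. norm (f - a n) < d + inverse (real (Suc n))"
    by metis
  have lim: "(\<lambda>n. norm (f - a n)) \<longlonglongrightarrow> d"
    by (rule tendsto_sandwich[OF _ _ tendsto_const LIMSEQ_inverse_real_of_nat_add])
      (use a d a_less in \<open>auto intro!: always_eventually less_imp_le\<close>)
  obtain p where ap: "a \<longlonglongrightarrow> p"
    using Cauchy_minimizing_sequence[OF S d a lim] Cauchy_convergent_iff convergent_def by blast
  have "norm (f - p) = d"
    using tendsto_norm[OF tendsto_diff[OF tendsto_const ap]] lim by (rule LIMSEQ_unique)
  moreover have "d \<le> norm (f - p - t *\<^sub>C s)" if "s \<in> S" for s t
  proof -
    have "(\<lambda>n. norm (f - (a n + t *\<^sub>C s))) \<longlonglongrightarrow> norm (f - (p + t *\<^sub>C s))"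
      by (intro tendsto_intros ap)
    moreover have "\<forall>n. d \<le> norm (f - (a n + t *\<^sub>C s))"
      using a that S by (intro allI d csubspace_add csubspace_scaleC)
    ultimately have "d \<le> norm (f - (p + t *\<^sub>C s))"
      by (intro LIMSEQ_le_const) auto
    thus ?thesis by (simp add: algebra_simps)
  qed
  ultimately have "\<forall>s\<in>S. cinner s (f - p) = 0"
    by (auto intro: cinner_eq_0_if_norm_minimal)
  moreover have "p \<in> closure S" using a ap by (auto simp: closure_sequential)
  ultimately show ?thesis by blast
qed

lemma orth_compl_decomposition:
  assumes "csubspace S" "closed S"
  obtains p where "p \<in> S" "x - p \<in> orth_compl S"
  using orthogonal_projection_exists[OF assms(1), of x] assms(2)
  by (auto simp: orth_compl_def closure_closed)

lemma subset_closure_if_orthogonal_trivial: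
  assumes S: "csubspace S" "S \<subseteq> M" and M: "csubspace M" "closed M"
    and trivial: "\<And>e. e \<in> M \<Longrightarrow> \<forall>s\<in>S. cinner s e = 0 \<Longrightarrow> e = 0"
  shows "M \<subseteq> closure (S :: 'a::chilbert set)"
proof
  fix m assume m: "m \<in> M"
  obtain p where p: "p \<in> closure S" and orth: "\<forall>s\<in>S. cinner s (m - p) = 0"
    using orthogonal_projection_exists[OF S(1)] by blast
  have "p \<in> M" using p closure_minimal[OF S(2) M(2)] by blast
  hence "m - p = 0" using trivial[OF csubspace_diff[OF M(1) m] orth] by blast
  thus "m \<in> closure S" using p by simp
qed

section \<open>Self-adjoint operators plus a strictly positive imaginary part\<close>

lemma cinner_self_adjoint_real:
  assumes "self_adjoint_op D B" "u \<in> D"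
  shows "Im (cinner u (B u)) = 0"
proof -
  have "cinner (B u) u = cinner u (B u)" using assms by (simp add: self_adjoint_op_def)
  hence "cnj (cinner u (B u)) = cinner u (B u)" using cinner_commute[of u "B u"] by simp
  thus ?thesis by (simp add: complex_eq_iff)
qed

lemma self_adjoint_op_closed:
  assumes B: "self_adjoint_op D B" and u: "\<And>n. u n \<in> D"
    and lim: "u \<longlonglongrightarrow> w" and lim_B: "(\<lambda>n. B (u n)) \<longlonglongrightarrow> g"
  shows "w \<in> D" "B w = g"
proof -
  have sym: "\<And>x y. x \<in> D \<Longrightarrow> y \<in> D \<Longrightarrow> cinner (B x) y = cinner x (B y)"
    using B by (simp add: self_adjoint_op_def)
  have adj: "cinner w (B x) = cinner g x" if x: "x \<in> D" for x
  proof (rule LIMSEQ_unique)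
    show "(\<lambda>n. cinner (u n) (B x)) \<longlonglongrightarrow> cinner w (B x)"
      by (rule bounded_linear.tendsto[OF bounded_linear_cinner_left[of "B x"] lim])
    show "(\<lambda>n. cinner (u n) (B x)) \<longlonglongrightarrow> cinner g x"
      using bounded_linear.tendsto[OF bounded_linear_cinner_left[of x] lim_B] by (simp add: sym[OF u x])
  qed
  thus w: "w \<in> D" using B unfolding self_adjoint_op_def adj_dom_def by blast
  have "cinner (B w - g) x = 0" if "x \<in> D" for x
    using adj[OF that] sym[OF w that] by (simp add: cinner_diff_left)
  hence "B w - g = 0" using B by (intro cinner_eq_0_on_dense) (auto simp: self_adjoint_op_def)
  thus "B w = g" by simp
qed

locale self_adjoint_plus_i =
  fixes B C :: "'a::chilbert \<Rightarrow> 'a" and D :: "'a set" and \<delta> :: real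
  assumes B_sa: "self_adjoint_op D B"
    and C_bdd: "cbounded C"
    and delta_pos: "\<delta> > 0"
    and C_ge: "\<forall>x. cinner x (C x) \<in> \<real> \<and> \<delta> * (norm x)\<^sup>2 \<le> Re (cinner x (C x))"
begin

definition A :: "'a \<Rightarrow> 'a" where "A x = B x + \<i> *\<^sub>C C x"

lemma D_csubspace: "csubspace D"
  using B_sa by (simp add: self_adjoint_op_def)

lemma clinear_on_A: "clinear_on D A"
proof -
  have B: "clinear_on D B" using B_sa by (simp add: self_adjoint_op_def)
  have C: "clinear_on UNIV C" by (rule cbounded_clinear[OF C_bdd])
  show ?thesis
    unfolding clinear_on_def
    by (simp add: A_def clinear_on_add[OF B] clinear_on_scaleC[OF B] clinear_add[OF C]
        clinear_scaleC[OF C] scaleC_add_right scaleC_scaleC mult.commute)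
qed

lemma Im_cinner_A: "u \<in> D \<Longrightarrow> Im (cinner u (A u)) = Re (cinner u (C u))"
  using cinner_self_adjoint_real[OF B_sa] by (simp add: A_def cinner_add_right cinner_scaleC_right)

lemma A_lower_bound: "u \<in> D \<Longrightarrow> \<delta> * norm u \<le> norm (A u)"
proof -
  assume u: "u \<in> D"
  have "\<delta> * (norm u)\<^sup>2 \<le> Im (cinner u (A u))" using Im_cinner_A[OF u] C_ge by simp
  also have "\<dots> \<le> norm u * norm (A u)"
    using abs_Im_le_cmod[of "cinner u (A u)"] cinner_cauchy_schwarz[of u "A u"] by linarith
  finally have "norm u * (\<delta> * norm u) \<le> norm u * norm (A u)" by (simp add: power2_eq_square mult_ac)
  thus ?thesis by (cases "norm u = 0") (auto simp: delta_pos)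
qed

lemma inj_on_A: "inj_on A D"
proof (rule inj_onI)
  fix x y assume xy: "x \<in> D" "y \<in> D" "A x = A y"
  hence "\<delta> * norm (x - y) \<le> 0"
    using A_lower_bound[OF csubspace_diff[OF D_csubspace xy(1,2)]]
      clinear_on_diff[OF clinear_on_A D_csubspace xy(1,2)] by simp
  thus "x = y" using delta_pos by (simp add: mult_le_0_iff)
qed

text \<open>A preimage of a Cauchy sequence in the range is Cauchy by the lower bound, and its limit
  lies in \<open>D\<close> because \<open>B\<close> is closed and \<open>C\<close> is continuous.\<close>

lemma closed_range_A: "closed (A ` D)"
proof (rule closed_sequential_limits[THEN iffD2], intro allI impI, elim conjE)
  fix y p assume yS: "\<forall>n. y n \<in> A ` D" and yp: "y \<longlonglongrightarrow> p"
  hence "\<forall>n. \<exists>v. v \<in> D \<and> y n = A v" by blast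
  then obtain u where u: "\<And>n. u n \<in> D" and yu: "\<And>n. y n = A (u n)" by metis
  have "Cauchy u"
  proof (rule metric_CauchyI)
    fix \<epsilon> :: real assume "\<epsilon> > 0"
    hence "\<delta> * \<epsilon> > 0" using delta_pos by simp
    then obtain N where N: "\<forall>m\<ge>N. \<forall>n\<ge>N. dist (y m) (y n) < \<delta> * \<epsilon>"
      using metric_CauchyD[OF LIMSEQ_imp_Cauchy[OF yp]] by blast
    have "dist (u m) (u n) < \<epsilon>" if "N \<le> m" "N \<le> n" for m n
    proof -
      have "\<delta> * norm (u m - u n) \<le> norm (y m - y n)"
        using A_lower_bound[OF csubspace_diff[OF D_csubspace u u]]
          clinear_on_diff[OF clinear_on_A D_csubspace u u] by (simp add: yu)
      also have "\<dots> < \<delta> * \<epsilon>" using N that by (simp add: dist_norm)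
      finally show ?thesis using delta_pos by (simp add: dist_norm)
    qed
    thus "\<exists>N. \<forall>m\<ge>N. \<forall>n\<ge>N. dist (u m) (u n) < \<epsilon>" by blast
  qed
  then obtain w where uw: "u \<longlonglongrightarrow> w" using Cauchy_convergent_iff convergent_def by blast
  have Cw: "(\<lambda>n. \<i> *\<^sub>C C (u n)) \<longlonglongrightarrow> \<i> *\<^sub>C C w"
    by (intro bounded_linear.tendsto[OF bounded_linear_scaleC]
        bounded_linear.tendsto[OF cbounded_bounded_linear[OF C_bdd] uw])
  have "(\<lambda>n. B (u n)) \<longlonglongrightarrow> p - \<i> *\<^sub>C C w"
    using tendsto_diff[OF yp Cw] by (simp add: yu A_def)
  from self_adjoint_op_closed[OF B_sa u uw this]
  have "w \<in> D" "B w = p - \<i> *\<^sub>C C w" by blast+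
  hence "A w = p" by (simp add: A_def)
  thus "p \<in> A ` D" using \<open>w \<in> D\<close> by blast
qed

lemma range_A_orthogonal_trivial:
  assumes orth: "\<forall>s\<in>A ` D. cinner s e = 0"
  shows "e = 0"
proof -
  have sym_C: "cinner (C x) y = cinner x (C y)" for x y
    using cinner_hermitian_commute[OF cbounded_clinear[OF C_bdd]] C_ge by blast
  have "cinner e (B x) = cinner (\<i> *\<^sub>C C e) x" if x: "x \<in> D" for x
  proof -
    have "cinner (B x) e = \<i> * cinner x (C e)"
      using orth x by (simp add: A_def cinner_add_left cinner_scaleC_left sym_C)
    hence "cinner e (B x) = cnj (\<i> * cinner x (C e))" using cinner_commute[of e "B x"] by simp
    thus ?thesis by (simp add: cinner_scaleC_left cinner_commute[of x])
  qed
  hence e: "e \<in> D" using B_sa unfolding self_adjoint_op_def adj_dom_def by blast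
  have "cinner (A e) e = 0" using orth e by blast
  hence "cinner e (A e) = 0" using cinner_commute[of e "A e"] by simp
  hence "Re (cinner e (C e)) = 0" using Im_cinner_A[OF e] by simp
  hence "\<delta> * (norm e)\<^sup>2 \<le> 0" using C_ge[rule_format, of e] by simp
  thus "e = 0" using delta_pos by (simp add: mult_le_0_iff)
qed

lemma bij_betw_A: "bij_betw A D UNIV"
proof -
  have "UNIV \<subseteq> closure (A ` D)"
    using range_A_orthogonal_trivial
    by (intro subset_closure_if_orthogonal_trivial csubspace_image D_csubspace clinear_on_A
        csubspace_UNIV) auto
  hence "UNIV \<subseteq> A ` D" using closed_range_A by (simp add: closure_closed)
  thus ?thesis using inj_on_A by (auto simp: bij_betw_def)
qed

end

lemma self_adjoint_op_diff:
  assumes B: "self_adjoint_op D B" and W: "cbounded W" "\<forall>x. cinner x (W x) \<in> \<real>"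
  shows "self_adjoint_op D (\<lambda>x. B x - W x)"
proof -
  have lin: "clinear_on UNIV W" using W(1) by (rule cbounded_clinear)
  have sym: "cinner (W x) y = cinner x (W y)" for x y
    by (rule cinner_hermitian_commute[OF lin W(2)])
  have "y \<in> adj_dom D B" if y: "y \<in> adj_dom D (\<lambda>x. B x - W x)" for y
  proof -
    obtain z where "\<forall>x\<in>D. cinner y (B x - W x) = cinner z x"
      using y unfolding adj_dom_def by blast
    hence "\<forall>x\<in>D. cinner y (B x) = cinner (z + W y) x"
      by (simp add: cinner_diff_right cinner_add_left sym algebra_simps)
    thus ?thesis unfolding adj_dom_def by blast
  qed
  thus ?thesis
    using B by (auto simp: self_adjoint_op_def clinear_on_def clinear_add[OF lin] clinear_scaleC[OF lin]
        scaleC_diff_right cinner_diff_left cinner_diff_right sym)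
qed

lemma self_adjoint_plus_i_minus_nonneg:
  assumes "self_adjoint_plus_i B C D \<delta>" and V: "cbounded V" "nonneg_op V" and \<xi>: "Im \<xi> \<le> 0"
  shows "self_adjoint_plus_i (\<lambda>x. B x - Re \<xi> *\<^sub>R V x) (\<lambda>x. C x - Im \<xi> *\<^sub>R V x) D \<delta>"
    and "self_adjoint_plus_i.A (\<lambda>x. B x - Re \<xi> *\<^sub>R V x) (\<lambda>x. C x - Im \<xi> *\<^sub>R V x)
           = (\<lambda>x. B x + \<i> *\<^sub>C C x - \<xi> *\<^sub>C V x)"
proof -
  interpret self_adjoint_plus_i B C D \<delta> by fact
  have real: "cinner x (r *\<^sub>R V x) \<in> \<real>" for r x
    using nonneg_op_cinner_real[OF V(2)] by (simp add: cinner_scaleR_right)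
  show sa: "self_adjoint_plus_i (\<lambda>x. B x - Re \<xi> *\<^sub>R V x) (\<lambda>x. C x - Im \<xi> *\<^sub>R V x) D \<delta>"
  proof
    show "self_adjoint_op D (\<lambda>x. B x - Re \<xi> *\<^sub>R V x)"
      using real by (intro self_adjoint_op_diff B_sa cbounded_scaleR V(1)) blast
    show "cbounded (\<lambda>x. C x - Im \<xi> *\<^sub>R V x)"
      by (intro cbounded_diff C_bdd cbounded_scaleR V(1))
    show "\<delta> > 0" by (rule delta_pos)
    show "\<forall>x. cinner x (C x - Im \<xi> *\<^sub>R V x) \<in> \<real> \<and>
        \<delta> * (norm x)\<^sup>2 \<le> Re (cinner x (C x - Im \<xi> *\<^sub>R V x))"
    proof
      fix x
      have "0 \<le> - Im \<xi> * Re (cinner x (V x))"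
        using \<xi> nonneg_op_cinner_nonneg[OF V(2)] by (simp add: mult_nonpos_nonneg)
      moreover have "cinner x (C x) \<in> \<real>" "\<delta> * (norm x)\<^sup>2 \<le> Re (cinner x (C x))"
        using C_ge by auto
      ultimately show "cinner x (C x - Im \<xi> *\<^sub>R V x) \<in> \<real> \<and>
          \<delta> * (norm x)\<^sup>2 \<le> Re (cinner x (C x - Im \<xi> *\<^sub>R V x))"
        using real[of x "Im \<xi>"]
        by (auto simp: cinner_diff_right cinner_scaleR_right complex_is_Real_iff)
    qed
  qed
  show "self_adjoint_plus_i.A (\<lambda>x. B x - Re \<xi> *\<^sub>R V x) (\<lambda>x. C x - Im \<xi> *\<^sub>R V x)
      = (\<lambda>x. B x + \<i> *\<^sub>C C x - \<xi> *\<^sub>C V x)"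
    by (simp add: self_adjoint_plus_i.A_def[OF sa] scaleC_Re_Im[of \<xi>] scaleC_diff_right
        scaleC_scaleR_commute fun_eq_iff algebra_simps)
qed

lemma dissipative_in_inj_on_shift:
  assumes T: "dissipative_in M D T" and \<xi>: "Im \<xi> < 0"
  shows "inj_on (\<lambda>x. T x - \<xi> *\<^sub>C x) D"
proof (rule inj_onI)
  have D: "csubspace D" and lin: "clinear_on D T" and diss: "\<forall>x\<in>D. 0 \<le> Im (cinner x (T x))"
    using T by (auto simp: dissipative_in_def)
  fix x y assume xy: "x \<in> D" "y \<in> D" "T x - \<xi> *\<^sub>C x = T y - \<xi> *\<^sub>C y"
  define z where "z = x - y"
  have z: "z \<in> D" using csubspace_diff[OF D xy(1,2)] by (simp add: z_def)
  have "T z = T x - T y" using clinear_on_diff[OF lin D xy(1,2)] by (simp add: z_def)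
  also have "\<dots> = \<xi> *\<^sub>C x - \<xi> *\<^sub>C y" using xy(3) by (simp add: algebra_simps)
  finally have "T z = \<xi> *\<^sub>C z" by (simp add: z_def scaleC_diff_right)
  hence "Im (cinner z (T z)) = Im \<xi> * (norm z)\<^sup>2"
    by (simp add: cinner_scaleC_right cinner_self_norm)
  moreover have "0 \<le> Im (cinner z (T z))" using diss z by blast
  ultimately have "0 \<le> Im \<xi> * (norm z)\<^sup>2" by simp
  hence "z = 0" using \<xi> by (simp add: zero_le_mult_iff)
  thus "x = y" by (simp add: z_def)
qed

text \<open>\<open>T' - \<xi>\<close> is injective on any dissipative extension \<open>T'\<close>, so \<open>T'\<close> cannot add a vector.\<close>

lemma max_dissipative_in_if_surj_shift:
  assumes M: "csubspace M" and T: "dissipative_in M D T" and \<xi>: "Im \<xi> < 0"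
    and surj: "M \<subseteq> (\<lambda>x. T x - \<xi> *\<^sub>C x) ` D"
  shows "max_dissipative_in M D T"
  unfolding max_dissipative_in_def
proof (intro conjI allI impI T)
  fix D' T' assume "dissipative_in M D' T' \<and> D \<subseteq> D' \<and> (\<forall>x\<in>D. T' x = T x)"
  hence T': "dissipative_in M D' T'" and sub: "D \<subseteq> D'" and ext: "\<forall>x\<in>D. T' x = T x" by simp_all
  have "D' \<subseteq> D"
  proof
    fix x' assume x': "x' \<in> D'"
    have "x' \<in> M" "T' x' \<in> M" using T' x' unfolding dissipative_in_def by blast+
    hence "T' x' - \<xi> *\<^sub>C x' \<in> M" by (intro csubspace_diff[OF M] csubspace_scaleC[OF M])
    hence "T' x' - \<xi> *\<^sub>C x' \<in> (\<lambda>x. T x - \<xi> *\<^sub>C x) ` D" using surj by (rule rev_subsetD)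
    then obtain x where x: "x \<in> D" and eq: "T' x' - \<xi> *\<^sub>C x' = T x - \<xi> *\<^sub>C x" by (rule imageE)
    have "T' x = T x" using ext x by blast
    have "x = x'"
    proof (rule inj_onD[OF dissipative_in_inj_on_shift[OF T' \<xi>]])
      show "T' x - \<xi> *\<^sub>C x = T' x' - \<xi> *\<^sub>C x'" by (simp only: \<open>T' x = T x\<close> eq)
      show "x \<in> D'" using sub x by (rule subsetD)
    qed (rule x')
    thus "x' \<in> D" using x by simp
  qed
  thus "D' = D" using sub by (rule subset_antisym)
qed

section \<open>The Birman--Schwinger operator\<close>

locale birman_schwinger = self_adjoint_plus_i B C D \<delta>
  for B C :: "'a::chilbert \<Rightarrow> 'a" and D :: "'a set" and \<delta> :: real +
  fixes V :: "'a \<Rightarrow> 'a"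
  assumes V_bdd: "cbounded V" and V_nonneg: "nonneg_op V"
begin

definition pencil :: "complex \<Rightarrow> 'a \<Rightarrow> 'a" where
  "pencil \<xi> x = B x + \<i> *\<^sub>C C x - \<xi> *\<^sub>C V x"

definition sandwich :: "complex \<Rightarrow> 'a \<Rightarrow> 'a" where
  "sandwich \<xi> y = op_sqrt V (inv_into D (pencil \<xi>) (op_sqrt V y))"

definition M :: "'a set" where
  "M = orth_compl (ker V)"

text \<open>\<open>sandwich \<xi>\<close> is \<open>V\<^sup>1\<^sup>/\<^sup>2 (A\<^sub>0 - \<xi> V)\<^sup>-\<^sup>1 V\<^sup>1\<^sup>/\<^sup>2\<close>; the operator \<open>K\<close> of the statement is \<open>sandwich 0\<close>.\<close>

definition A_BS :: "'a \<Rightarrow> 'a" where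
  "A_BS = inv_into M (sandwich 0)"

abbreviation Q :: "'a \<Rightarrow> 'a" where
  "Q \<equiv> op_sqrt V"

lemma clinear_Q: "clinear_on UNIV Q"
  using op_sqrt(1)[OF V_bdd V_nonneg] by (rule cbounded_clinear)

lemma Q_Q: "Q (Q x) = V x"
  by (rule op_sqrt(3)[OF V_bdd V_nonneg])

lemma cinner_Q_commute: "cinner (Q x) y = cinner x (Q y)"
  by (rule nonneg_op_cinner_commute[OF clinear_Q op_sqrt(2)[OF V_bdd V_nonneg]])

lemma Q_eq_0_iff: "Q x = 0 \<longleftrightarrow> V x = 0"
proof
  assume "V x = 0"
  hence "cinner (Q x) (Q x) = 0" using cinner_Q_commute[of x "Q x"] by (simp add: Q_Q)
  thus "Q x = 0" by simp
qed (simp flip: Q_Q add: clinear_0[OF clinear_Q])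

lemma Q_in_M: "Q x \<in> M"
  unfolding M_def orth_compl_def ker_def
proof (intro CollectI ballI)
  fix y assume "y \<in> {x. V x = 0}"
  hence "Q y = 0" using Q_eq_0_iff by simp
  thus "cinner y (Q x) = 0" using cinner_Q_commute[of y x] by simp
qed

lemma M_csubspace: "csubspace M"
  unfolding M_def by (rule orth_compl_csubspace)

lemma M_ker_trivial: "m \<in> M \<Longrightarrow> V m = 0 \<Longrightarrow> m = 0"
  unfolding M_def orth_compl_def ker_def by auto

context
  fixes \<xi> :: complex
  assumes \<xi>: "Im \<xi> \<le> 0"
begin

lemma pencil_self_adjoint_plus_i:
  "self_adjoint_plus_i (\<lambda>x. B x - Re \<xi> *\<^sub>R V x) (\<lambda>x. C x - Im \<xi> *\<^sub>R V x) D \<delta>"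
  "self_adjoint_plus_i.A (\<lambda>x. B x - Re \<xi> *\<^sub>R V x) (\<lambda>x. C x - Im \<xi> *\<^sub>R V x) = pencil \<xi>"
  using self_adjoint_plus_i_minus_nonneg[OF self_adjoint_plus_i_axioms V_bdd V_nonneg \<xi>]
  by (simp_all add: pencil_def[abs_def])

lemma bij_betw_pencil: "bij_betw (pencil \<xi>) D UNIV"
  using self_adjoint_plus_i.bij_betw_A[OF pencil_self_adjoint_plus_i(1)]
  by (simp add: pencil_self_adjoint_plus_i(2))

lemma pencil_lower_bound: "u \<in> D \<Longrightarrow> \<delta> * norm u \<le> norm (pencil \<xi> u)"
  using self_adjoint_plus_i.A_lower_bound[OF pencil_self_adjoint_plus_i(1)]
  by (simp add: pencil_self_adjoint_plus_i(2))

lemma clinear_on_pencil: "clinear_on D (pencil \<xi>)"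
  using self_adjoint_plus_i.clinear_on_A[OF pencil_self_adjoint_plus_i(1)]
  by (simp add: pencil_self_adjoint_plus_i(2))

lemma pencil_inv_in_D: "inv_into D (pencil \<xi>) y \<in> D"
  using bij_betw_pencil by (intro inv_into_into) (simp add: bij_betw_def)

lemma pencil_pencil_inv: "pencil \<xi> (inv_into D (pencil \<xi>) y) = y"
  using bij_betw_pencil by (intro f_inv_into_f) (simp add: bij_betw_def)

lemma pencil_inv_pencil: "u \<in> D \<Longrightarrow> inv_into D (pencil \<xi>) (pencil \<xi> u) = u"
  using bij_betw_pencil by (intro inv_into_f_f) (simp_all add: bij_betw_def)

lemma norm_pencil_inv: "\<delta> * norm (inv_into D (pencil \<xi>) y) \<le> norm y"
  using pencil_lower_bound[OF pencil_inv_in_D] by (simp add: pencil_pencil_inv)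

lemma clinear_sandwich: "clinear_on UNIV (sandwich \<xi>)"
proof -
  have inv: "clinear_on UNIV (inv_into D (pencil \<xi>))"
    using clinear_on_inv_into[OF D_csubspace clinear_on_pencil] bij_betw_pencil
    by (simp add: bij_betw_def)
  show ?thesis
    by (intro clinearI) (simp_all add: sandwich_def clinear_add[OF inv] clinear_scaleC[OF inv]
        clinear_add[OF clinear_Q] clinear_scaleC[OF clinear_Q])
qed

lemma bounded_sandwich: "\<exists>c. \<forall>y. norm (sandwich \<xi> y) \<le> c * norm y"
proof -
  obtain K where K: "K > 0" "\<And>x. norm (Q x) \<le> K * norm x"
    using cbounded_posE[OF op_sqrt(1)[OF V_bdd V_nonneg]] by blast
  have "norm (sandwich \<xi> y) \<le> (K * K / \<delta>) * norm y" for y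
  proof -
    have "norm (sandwich \<xi> y) \<le> K * norm (inv_into D (pencil \<xi>) (Q y))"
      unfolding sandwich_def by (rule K(2))
    also have "norm (inv_into D (pencil \<xi>) (Q y)) \<le> norm (Q y) / \<delta>"
      using norm_pencil_inv[of "Q y"] delta_pos by (simp add: pos_le_divide_eq mult.commute)
    also have "norm (Q y) \<le> K * norm y" by (rule K(2))
    finally show ?thesis using K(1) delta_pos by (simp add: mult_left_mono divide_right_mono mult_ac)
  qed
  thus ?thesis by blast
qed

end

lemma pencil_0: "pencil 0 = A"
  by (simp add: pencil_def[abs_def] A_def[abs_def])

text \<open>The strict positivity of \<open>C\<close> survives the sandwiching: with \<open>u = A\<^sup>-\<^sup>1 Q m\<close>,
  \<open>\<langle>K m, m\<rangle> = \<langle>u, A u\<rangle>\<close>, whose imaginary part is \<open>\<langle>u, C u\<rangle> \<ge> \<delta> \<parallel>u\<parallel>\<^sup>2\<close>.\<close>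

lemma Im_cinner_sandwich:
  "\<delta> * (norm (inv_into D A (Q m)))\<^sup>2 \<le> Im (cinner (sandwich 0 m) m)"
proof -
  let ?u = "inv_into D A (Q m)"
  have u: "?u \<in> D" and Au: "A ?u = Q m"
    using pencil_inv_in_D[of 0 "Q m"] pencil_pencil_inv[of 0 "Q m"] by (simp_all add: pencil_0)
  have "cinner (sandwich 0 m) m = cinner ?u (A ?u)"
    by (simp add: sandwich_def pencil_0 cinner_Q_commute Au)
  hence "Im (cinner (sandwich 0 m) m) = Re (cinner ?u (C ?u))" using Im_cinner_A[OF u] by simp
  thus ?thesis using C_ge[rule_format, of ?u] by simp
qed

lemma sandwich_eq_0_if_Im_cinner_nonpos:
  assumes "m \<in> M" "Im (cinner (sandwich 0 m) m) \<le> 0"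
  shows "m = 0"
proof -
  have "\<delta> * (norm (inv_into D A (Q m)))\<^sup>2 \<le> 0"
    using Im_cinner_sandwich[of m] assms(2) by simp
  hence "inv_into D A (Q m) = 0" using delta_pos by (simp add: mult_le_0_iff)
  hence "Q m = 0"
    using pencil_pencil_inv[of 0 "Q m"] clinear_on_0[OF clinear_on_A D_csubspace]
    by (simp add: pencil_0)
  thus "m = 0" using assms(1) M_ker_trivial Q_eq_0_iff by blast
qed

lemma inj_on_sandwich: "inj_on (sandwich 0) M"
proof (rule inj_onI)
  fix x y assume xy: "x \<in> M" "y \<in> M" "sandwich 0 x = sandwich 0 y"
  hence "sandwich 0 (x - y) = 0" by (simp add: clinear_diff[OF clinear_sandwich])
  hence "x - y = 0"
    by (intro sandwich_eq_0_if_Im_cinner_nonpos csubspace_diff[OF M_csubspace xy(1,2)]) simp_all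
  thus "x = y" by simp
qed

lemma range_sandwich: "range (sandwich 0) = sandwich 0 ` M"
proof (intro equalityI subsetI)
  fix z assume "z \<in> range (sandwich 0)"
  then obtain x where z: "z = sandwich 0 x" by blast
  obtain p where p: "p \<in> ker V" "x - p \<in> M"
    using orth_compl_decomposition[OF ker_csubspace[OF cbounded_clinear[OF V_bdd]] closed_ker[OF V_bdd]]
    unfolding M_def by blast
  have "Q p = 0" using p(1) Q_eq_0_iff by (simp add: ker_def)
  hence "sandwich 0 p = sandwich 0 0" by (simp add: sandwich_def clinear_0[OF clinear_Q])
  also have "\<dots> = 0" by (rule clinear_0[OF clinear_sandwich]) simp
  finally have "sandwich 0 p = 0" .
  hence "z = sandwich 0 (x - p)" by (simp add: z clinear_diff[OF clinear_sandwich])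
  thus "z \<in> sandwich 0 ` M" using p(2) by blast
qed blast

lemma csubspace_range_sandwich: "csubspace (range (sandwich 0))"
  using csubspace_image[OF csubspace_UNIV clinear_sandwich] by simp

lemma A_BS_sandwich: "m \<in> M \<Longrightarrow> A_BS (sandwich 0 m) = m"
  unfolding A_BS_def by (rule inv_into_f_f[OF inj_on_sandwich])

lemma sandwich_A_BS: "x \<in> range (sandwich 0) \<Longrightarrow> A_BS x \<in> M \<and> sandwich 0 (A_BS x) = x"
  unfolding A_BS_def range_sandwich by (simp add: inv_into_into f_inv_into_f)

lemma dissipative_A_BS: "dissipative_in M (range (sandwich 0)) A_BS"
  unfolding dissipative_in_def
proof (intro conjI ballI csubspace_range_sandwich)
  show "range (sandwich 0) \<subseteq> M" using Q_in_M by (auto simp: sandwich_def)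
  show "M \<subseteq> closure (range (sandwich 0))"
  proof (rule subset_closure_if_orthogonal_trivial[OF csubspace_range_sandwich _ M_csubspace])
    show "range (sandwich 0) \<subseteq> M" using Q_in_M by (auto simp: sandwich_def)
    show "closed M" unfolding M_def by (rule closed_orth_compl)
    fix e assume "e \<in> M" "\<forall>s\<in>range (sandwich 0). cinner s e = 0"
    thus "e = 0" by (intro sandwich_eq_0_if_Im_cinner_nonpos) simp_all
  qed
  have "clinear_on M (sandwich 0)"
    using clinear_sandwich[of 0] by (simp add: clinear_on_def)
  thus "clinear_on (range (sandwich 0)) A_BS"
    unfolding A_BS_def range_sandwich by (rule clinear_on_inv_into[OF M_csubspace _ inj_on_sandwich])
  fix x assume x: "x \<in> range (sandwich 0)"
  show "A_BS x \<in> M" using sandwich_A_BS[OF x] by blast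
  have "0 \<le> \<delta> * (norm (inv_into D A (Q (A_BS x))))\<^sup>2" using delta_pos by simp
  also have "\<dots> \<le> Im (cinner (sandwich 0 (A_BS x)) (A_BS x))" by (rule Im_cinner_sandwich)
  finally show "0 \<le> Im (cinner x (A_BS x))" using sandwich_A_BS[OF x] by simp
qed

context
  fixes \<xi> :: complex
  assumes \<xi>: "Im \<xi> \<le> 0"
begin

text \<open>The second resolvent identity in disguise: \<open>A\<^sub>0 u = (A\<^sub>0 - \<xi> V) u + \<xi> Q (Q u)\<close>.\<close>

lemma sandwich_resolvent_identity:
  assumes y: "y \<in> M"
  shows "sandwich \<xi> y \<in> range (sandwich 0)"
    and "A_BS (sandwich \<xi> y) - \<xi> *\<^sub>C sandwich \<xi> y = y"
proof -
  define u where "u = inv_into D (pencil \<xi>) (Q y)"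
  define w where "w = y + \<xi> *\<^sub>C sandwich \<xi> y"
  have w: "w \<in> M"
    unfolding w_def using y Q_in_M M_csubspace
    by (simp add: sandwich_def csubspace_add csubspace_scaleC)
  have "Q w = pencil \<xi> u + \<xi> *\<^sub>C V u"
    using pencil_pencil_inv[OF \<xi>, of "Q y"]
    by (simp add: w_def u_def sandwich_def clinear_add[OF clinear_Q] clinear_scaleC[OF clinear_Q] Q_Q)
  also have "\<dots> = pencil 0 u" by (simp add: pencil_def)
  finally have "inv_into D (pencil 0) (Q w) = u"
    using pencil_inv_pencil[of 0 u] pencil_inv_in_D[OF \<xi>] by (simp add: u_def)
  hence sw: "sandwich 0 w = sandwich \<xi> y" by (simp add: sandwich_def u_def)
  thus "sandwich \<xi> y \<in> range (sandwich 0)" by (metis rangeI)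
  have "A_BS (sandwich \<xi> y) = w" using A_BS_sandwich[OF w] by (simp only: sw)
  thus "A_BS (sandwich \<xi> y) - \<xi> *\<^sub>C sandwich \<xi> y = y" by (simp add: w_def)
qed

lemma inj_on_A_BS_shift: "inj_on (\<lambda>x. A_BS x - \<xi> *\<^sub>C x) (range (sandwich 0))"
proof (rule inj_onI)
  fix x1 x2 assume x: "x1 \<in> range (sandwich 0)" "x2 \<in> range (sandwich 0)"
    and eq: "A_BS x1 - \<xi> *\<^sub>C x1 = A_BS x2 - \<xi> *\<^sub>C x2"
  define x where "x = x1 - x2"
  have x_range: "x \<in> range (sandwich 0)"
    unfolding x_def by (rule csubspace_diff[OF csubspace_range_sandwich x])
  have lin: "clinear_on (range (sandwich 0)) A_BS"
    using dissipative_A_BS by (simp add: dissipative_in_def)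
  have "A_BS x = A_BS x1 - A_BS x2"
    unfolding x_def by (rule clinear_on_diff[OF lin csubspace_range_sandwich x])
  also have "\<dots> = \<xi> *\<^sub>C x1 - \<xi> *\<^sub>C x2" using eq by (simp add: algebra_simps)
  finally have "A_BS x = \<xi> *\<^sub>C x" by (simp add: x_def scaleC_diff_right)
  hence "Im (cinner (sandwich 0 (A_BS x)) (A_BS x)) = Im \<xi> * (norm x)\<^sup>2"
    using sandwich_A_BS[OF x_range] by (simp add: cinner_scaleC_right cinner_self_norm)
  hence "A_BS x = 0"
    using \<xi> sandwich_A_BS[OF x_range]
    by (intro sandwich_eq_0_if_Im_cinner_nonpos) (simp_all add: mult_nonpos_nonneg)
  hence "x = sandwich 0 0" using sandwich_A_BS[OF x_range] by simp
  hence "x = 0" using clinear_0[OF clinear_sandwich[of 0]] by simp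
  thus "x1 = x2" by (simp add: x_def)
qed

lemma bij_betw_A_BS_shift: "bij_betw (\<lambda>x. A_BS x - \<xi> *\<^sub>C x) (range (sandwich 0)) M"
  unfolding bij_betw_def
proof (intro conjI inj_on_A_BS_shift equalityI subsetI)
  fix y assume "y \<in> (\<lambda>x. A_BS x - \<xi> *\<^sub>C x) ` range (sandwich 0)"
  then obtain x where x: "x \<in> range (sandwich 0)" and y: "y = A_BS x - \<xi> *\<^sub>C x" by blast
  have "x \<in> M" using x dissipative_A_BS by (auto simp: dissipative_in_def)
  thus "y \<in> M" using y sandwich_A_BS[OF x] M_csubspace by (simp add: csubspace_diff csubspace_scaleC)
next
  fix y assume y: "y \<in> M"
  show "y \<in> (\<lambda>x. A_BS x - \<xi> *\<^sub>C x) ` range (sandwich 0)"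
    by (rule rev_image_eqI[OF sandwich_resolvent_identity(1)[OF y]])
      (simp add: sandwich_resolvent_identity(2)[OF y])
qed

lemma resolvent_A_BS:
  "y \<in> M \<Longrightarrow> inv_into (range (sandwich 0)) (\<lambda>x. A_BS x - \<xi> *\<^sub>C x) y = sandwich \<xi> y"
  by (rule inv_into_f_eq[OF inj_on_A_BS_shift sandwich_resolvent_identity])

end

lemma max_dissipative_A_BS: "max_dissipative_in M (range (sandwich 0)) A_BS"
proof (rule max_dissipative_in_if_surj_shift[where \<xi>="-\<i>"])
  show "csubspace M" by (rule M_csubspace)
  show "dissipative_in M (range (sandwich 0)) A_BS" by (rule dissipative_A_BS)
  show "M \<subseteq> (\<lambda>x. A_BS x - (- \<i>) *\<^sub>C x) ` range (sandwich 0)"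
    using bij_betw_A_BS_shift[of "-\<i>"] by (simp add: bij_betw_def)
qed simp

end

theorem lemmaB1:
  fixes B C V :: "'h::chilbert \<Rightarrow> 'h" and D :: "'h set" and \<delta> :: real
  assumes separable: "\<exists>S::'h set. countable S \<and> closure S = UNIV"
    and B_sa: "self_adjoint_op D B"
    and C_bdd: "cbounded C"
    and delta_pos: "\<delta> > 0"
    and C_ge: "\<forall>x. cinner x (C x) \<in> \<real> \<and> \<delta> * (norm x)\<^sup>2 \<le> Re (cinner x (C x))"
    and V_bdd: "cbounded V"
    and V_nonneg: "nonneg_op V"
  defines "A0 \<equiv> (\<lambda>x. B x + \<i> *\<^sub>C C x)"
    and "K \<equiv> (\<lambda>x. op_sqrt V (inv_into D (\<lambda>x. B x + \<i> *\<^sub>C C x) (op_sqrt V x)))"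
    and "M \<equiv> orth_compl (ker V)"
  shows "inj_on K M \<and> max_dissipative_in M (range K) (inv_into M K) \<and>
    (\<forall>\<xi>. Im \<xi> \<le> 0 \<longrightarrow>
       in_resolvent_in M (range K) (inv_into M K) \<xi> \<and>
       bij_betw (\<lambda>x. A0 x - \<xi> *\<^sub>C V x) D UNIV \<and>
       (\<forall>y\<in>M. inv_into (range K) (\<lambda>x. (inv_into M K) x - \<xi> *\<^sub>C x) y
               = op_sqrt V (inv_into D (\<lambda>x. A0 x - \<xi> *\<^sub>C V x) (op_sqrt V y))))"
proof -
  interpret bs: birman_schwinger B C D \<delta> V
    using B_sa C_bdd delta_pos C_ge V_bdd V_nonneg by unfold_locales
  have pencil: "(\<lambda>x. A0 x - \<xi> *\<^sub>C V x) = bs.pencil \<xi>" for \<xi>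
    by (simp add: A0_def bs.pencil_def[abs_def])
  have K: "K = bs.sandwich 0"
    by (simp add: K_def bs.sandwich_def[abs_def] bs.pencil_def[abs_def])
  have M: "M = bs.M" by (simp add: M_def bs.M_def)
  show ?thesis
    unfolding pencil K M in_resolvent_in_def bs.sandwich_def[symmetric] bs.A_BS_def[symmetric]
  proof (intro conjI allI impI bs.inj_on_sandwich bs.max_dissipative_A_BS ballI)
    fix \<xi> :: complex assume \<xi>: "Im \<xi> \<le> 0"
    show "bij_betw (\<lambda>x. bs.A_BS x - \<xi> *\<^sub>C x) (range (bs.sandwich 0)) bs.M"
      by (rule bs.bij_betw_A_BS_shift[OF \<xi>])
    show "bij_betw (bs.pencil \<xi>) D UNIV" by (rule bs.bij_betw_pencil[OF \<xi>])
    show "inv_into (range (bs.sandwich 0)) (\<lambda>x. bs.A_BS x - \<xi> *\<^sub>C x) y = bs.sandwich \<xi> y"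
      if "y \<in> bs.M" for y
      by (rule bs.resolvent_A_BS[OF \<xi> that])
    obtain c where "\<forall>y. norm (bs.sandwich \<xi> y) \<le> c * norm y" using bs.bounded_sandwich[OF \<xi>] by blast
    thus "\<exists>c. \<forall>y\<in>bs.M. norm (inv_into (range (bs.sandwich 0)) (\<lambda>x. bs.A_BS x - \<xi> *\<^sub>C x) y)
        \<le> c * norm y"
      using bs.resolvent_A_BS[OF \<xi>] by auto
  qed
qed

end
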